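(* Fix one of the two variants $\sharp\in\{\text{lumped},\text{exact}\}$ described in the context. Let $\vec X^m\in\underline V^h_{\partial_0}$ satisfy assumption $(\mathfrak A)$ and assumption $(\mathfrak C)_\sharp$, and let $\Delta t_m>0$. Then there exists a unique pair $(\delta\vec X^{m+1},\kappa^{m+1})\in\underline V^h_\partial\times W_\sharp$ such that, with $\vec X^{m+1}=\vec X^m+\delta\vec X^{m+1}$, $$\Big(\vec X^m\cdot\vec e_1\,\tfrac{\vec X^{m+1}-\vec X^m}{\Delta t_m},\chi\,\vec\nu^m|\vec X^m_\rho|\Big)_\sharp=\Big(\vec X^m\cdot\vec e_1\,\kappa^{m+1},\chi\,|\vec X^m_\rho|\Big)_\sharp\quad\forall\,\chi\in W_\sharp,$$ $$\Big(\vec X^m\cdot\vec e_1\,\kappa^{m+1}\vec\nu^m,\vec\eta\,|\vec X^m_\rho|\Big)_\sharp+\big(\vec\eta\cdot\vec e_1,|\vec X^m_\rho|\big)+\Big((\vec X^m\cdot\vec e_1)\vec X^{m+1}_\rho,\vec\eta_\rho|\vec X^m_\rho|^{-1}\Big)=-\sum_{i=1}^2\sum_{p\in\partial_iI}\widehat\varrho^{(p)}(\vec X^m(p)\cdot\vec e_1)\,\vec\eta(p)\cdot\vec e_{3-i}\quad\forall\,\vec\eta\in\underline V^h_\partial .$$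
   Context: Setup. $\vec e_1=(1,0)^T$, $\vec e_2=(0,1)^T$; "$\cdot$" is the Euclidean inner product. $I$ is either the periodic interval $\mathbb R/\mathbb Z$ (with $\partial I=\emptyset$) or $I=(0,1)$ (with $\partial I=\{0,1\}$). $\partial I=\partial_DI\cup\partial_0I\cup\partial_1I\cup\partial_2I$ is a given disjoint partition, and $\widehat\varrho^{(p)}\in\mathbb R$, $p\in\{0,1\}$, are given constants with $|\widehat\varrho^{(p)}|\le1$. Let $J\ge3$, $h=1/J$, $q_j=jh$ ($j=0,\dots,J$; $q_0=q_J$ identified in the periodic case). $V^h$ is the space of continuous functions on $\overline I$ (periodic if $I=\mathbb R/\mathbb Z$) that are affine on each $[q_{j-1},q_j]$; $\underline V^h=[V^h]^2$; $\underline V^h_{\partial_0}=\{\vec\eta\in\underline V^h:\vec\eta(\rho)\cdot\vec e_1=0\ \forall\rho\in\partial_0I\}$; $\underline V^h_\partial=\{\vec\eta\in\underline V^h_{\partial_0}:\vec\eta(\rho)\cdot\vec e_i=0\ \forall\rho\in\partial_iI,\ i=1,2;\ \vec\eta(\rho)=\vec0\ \forall\rho\in\partial_DI\}$; $W^h_{\partial_0}=\{\chi\in V^h:\chi(\rho)=0\ \forall\rho\in\partial_0I\}$. $(\cdot,\cdot)$ is the $L^2(I)$ inner product (with dot product for vector functions), and for piecewise continuous $f,g$ the mass-lumped product is $(f,g)^h=\tfrac h2\sum_{j=1}^J[(fg)(q_j^-)+(fg)(q_{j-1}^+)]$. Two variants: in the "lumped" variant $(\cdot,\cdot)_\sharp=(\cdot,\cdot)^h$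 and $W_\sharp=W^h_{\partial_0}$; in the "exact" variant $(\cdot,\cdot)_\sharp=(\cdot,\cdot)$ and $W_\sharp=V^h$. For $\vec X^m\in\underline V^h_{\partial_0}$ with $|\vec X^m_\rho|>0$ a.e., set $\vec\nu^m=-[\vec X^m_\rho]^\perp/|\vec X^m_\rho|$, where $(a,b)^\perp=(b,-a)$. Assumption $(\mathfrak A)$: $|\vec X^m_\rho|>0$ a.e. on $I$ and $\vec X^m(\rho)\cdot\vec e_1>0$ for all $\rho\in\overline I\setminus\partial_0I$. Assumption $(\mathfrak C)_\sharp$: the set $\{((\vec X^m\cdot\vec e_1)\vec\nu^m,\chi|\vec X^m_\rho|)_\sharp:\chi\in W_\sharp\}\subset\mathbb R^2$ spans $\mathbb R^2$. *)

theory Defs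
  imports "HOL-Analysis.Analysis"
begin

definition e1 :: "real^2" where "e1 = axis 1 1"
definition e2 :: "real^2" where "e2 = axis 2 1"
definition perp :: "real^2 \<Rightarrow> real^2" where "perp v = vector [v$2, - (v$1)]"

definition node :: "nat \<Rightarrow> nat \<Rightarrow> real" where "node J j = real j / real J"

text \<open>Boundary of I: empty in the periodic case, {0,1} for I = (0,1).
  The periodic interval R/Z is represented by [0,1] with identified end points.\<close>
definition bdry :: "bool \<Rightarrow> real set" where
  "bdry periodic = (if periodic then {} else {0, 1})"

text \<open>V^h: continuous piecewise affine functions on [0,1] (periodic if required);
  functions are normalised to vanish outside [0,1] so that they are determined
  by their values on the closure of I.\<close>
definition Vh :: "bool \<Rightarrow> nat \<Rightarrow> (real \<Rightarrow> real) set" where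
  "Vh periodic J = {f. continuous_on {0..1} f
      \<and> (\<forall>j\<in>{1..J}. \<exists>a b. \<forall>x\<in>{node J (j - 1)..node J j}. f x = a * x + b)
      \<and> (periodic \<longrightarrow> f 0 = f 1)
      \<and> (\<forall>x. x \<notin> {0..1} \<longrightarrow> f x = 0)}"

definition VVh :: "bool \<Rightarrow> nat \<Rightarrow> (real \<Rightarrow> real^2) set" where
  "VVh periodic J = {X. \<forall>i. (\<lambda>x. X x $ i) \<in> Vh periodic J}"

definition VVh0 :: "bool \<Rightarrow> nat \<Rightarrow> real set \<Rightarrow> (real \<Rightarrow> real^2) set" where
  "VVh0 periodic J d0 = {X \<in> VVh periodic J. \<forall>r\<in>d0. X r \<bullet> e1 = 0}"

definition VVhD :: "bool \<Rightarrow> nat \<Rightarrow> real set \<Rightarrow> real set \<Rightarrow> real set \<Rightarrow> real set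
    \<Rightarrow> (real \<Rightarrow> real^2) set" where
  "VVhD periodic J dD d0 d1 d2 = {X \<in> VVh0 periodic J d0.
      (\<forall>r\<in>d1. X r \<bullet> e1 = 0) \<and> (\<forall>r\<in>d2. X r \<bullet> e2 = 0) \<and> (\<forall>r\<in>dD. X r = 0)}"

definition Wh0 :: "bool \<Rightarrow> nat \<Rightarrow> real set \<Rightarrow> (real \<Rightarrow> real) set" where
  "Wh0 periodic J d0 = {c \<in> Vh periodic J. \<forall>r\<in>d0. c r = 0}"

text \<open>Derivative w.r.t. rho (defined a.e.; piecewise constant for elements of V^h).\<close>
definition Xrho :: "(real \<Rightarrow> 'a::real_normed_vector) \<Rightarrow> real \<Rightarrow> 'a" where
  "Xrho X x = vector_derivative X (at x)"

definition nu :: "(real \<Rightarrow> real^2) \<Rightarrow> real \<Rightarrow> real^2" where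
  "nu X x = (1 / norm (Xrho X x)) *\<^sub>R (- perp (Xrho X x))"

definition ip :: "(real \<Rightarrow> 'a::real_inner) \<Rightarrow> (real \<Rightarrow> 'a) \<Rightarrow> real" where
  "ip f g = integral {0..1} (\<lambda>x. f x \<bullet> g x)"

definition ip_lump :: "nat \<Rightarrow> (real \<Rightarrow> 'a::real_inner) \<Rightarrow> (real \<Rightarrow> 'a) \<Rightarrow> real" where
  "ip_lump J f g = (1 / real J) / 2 * (\<Sum>j\<in>{1..J}.
      Lim (at_left (node J j)) (\<lambda>x. f x \<bullet> g x)
    + Lim (at_right (node J (j - 1))) (\<lambda>x. f x \<bullet> g x))"

definition ip_sharp :: "bool \<Rightarrow> nat \<Rightarrow> (real \<Rightarrow> 'a::real_inner) \<Rightarrow> (real \<Rightarrow> 'a) \<Rightarrow> real" where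
  "ip_sharp lumped J f g = (if lumped then ip_lump J f g else ip f g)"

definition W_sharp :: "bool \<Rightarrow> bool \<Rightarrow> nat \<Rightarrow> real set \<Rightarrow> (real \<Rightarrow> real) set" where
  "W_sharp lumped periodic J d0 = (if lumped then Wh0 periodic J d0 else Vh periodic J)"

definition assmA :: "real set \<Rightarrow> (real \<Rightarrow> real^2) \<Rightarrow> bool" where
  "assmA d0 X \<longleftrightarrow> (AE x in lborel. x \<in> {0..1} \<longrightarrow> norm (Xrho X x) > 0)
      \<and> (\<forall>r\<in>{0..1} - d0. X r \<bullet> e1 > 0)"

definition assmC :: "bool \<Rightarrow> bool \<Rightarrow> nat \<Rightarrow> real set \<Rightarrow> (real \<Rightarrow> real^2) \<Rightarrow> bool" where
  "assmC lumped periodic J d0 X \<longleftrightarrow>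
     span {(\<chi> i. ip_sharp lumped J (\<lambda>x. (X x \<bullet> e1) * (nu X x $ i))
                                    (\<lambda>x. c x * norm (Xrho X x)))
           | c. c \<in> W_sharp lumped periodic J d0} = UNIV"

end

theory Submission
  imports Defs "HOL-Library.Function_Algebras"
begin

text \<open>
  The scheme is a square linear system for \<open>(\<delta>X, \<kappa>)\<close> on the finite-dimensional space
  \<open>V\<^sup>h\<^sub>\<partial> \<times> W\<^sub>\<sharp>\<close>, so it is uniquely solvable as soon as the homogeneous system has only the
  trivial solution. Testing the homogeneous system with \<open>\<eta> = \<delta>X\<close> and \<open>\<chi> = -\<Delta>t \<kappa>\<close> cancels
  the two coupling terms and leaves
  \<open>\<Delta>t (X\<cdot>e1 \<kappa>, \<kappa> |X\<^sub>\<rho>|)\<^sub>\<sharp> + (X\<cdot>e1 \<delta>X\<^sub>\<rho>, \<delta>X\<^sub>\<rho> / |X\<^sub>\<rho>|) = 0\<close>.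
  By (A) both terms are nonnegative, hence zero, and as \<open>X\<cdot>e1 > 0\<close> inside \<open>I\<close> this forces
  \<open>\<delta>X\<close> to be constant and \<open>\<kappa> = 0\<close>; in the lumped case only nodal values are seen, and at
  the nodes of \<open>\<partial>\<^sub>0I\<close>, where \<open>X\<cdot>e1\<close> vanishes, \<open>\<kappa> \<in> W\<^sup>h\<^sub>\<partial>\<^sub>0\<close> vanishes anyway. For
  constant \<open>\<delta>X\<close> the first equation says that \<open>\<delta>X\<close> is orthogonal to the vectors of
  (C)\<open>\<^sub>\<sharp>\<close>, which span \<open>\<real>\<^sup>2\<close>; so \<open>\<delta>X = 0\<close>.
\<close>

section \<open>Linear algebra on subspaces\<close>

instantiation "fun" :: (type, real_vector) real_vector
begin

definition scaleR_fun :: "real \<Rightarrow> ('a \<Rightarrow> 'b) \<Rightarrow> 'a \<Rightarrow> 'b" where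
  "scaleR_fun r f = (\<lambda>x. r *\<^sub>R f x)"
instance by standard (auto simp: scaleR_fun_def fun_eq_iff scaleR_add_right scaleR_add_left)
end

lemma scaleR_fun_apply [simp]: "(r *\<^sub>R f) x = r *\<^sub>R f x"
  by (simp add: scaleR_fun_def)

definition linear_on :: "'a::real_vector set \<Rightarrow> ('a \<Rightarrow> 'b::real_vector) \<Rightarrow> bool" where
  "linear_on U f \<longleftrightarrow> (\<forall>x\<in>U. \<forall>y\<in>U. \<forall>a b. f (a *\<^sub>R x + b *\<^sub>R y) = a *\<^sub>R f x + b *\<^sub>R f y)"

lemma linear_onD:
  "linear_on U f \<Longrightarrow> x \<in> U \<Longrightarrow> y \<in> U \<Longrightarrow> f (a *\<^sub>R x + b *\<^sub>R y) = a *\<^sub>R f x + b *\<^sub>R f y"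
  unfolding linear_on_def by blast

lemma linear_on_0:
  assumes "subspace U" "linear_on U f" shows "f 0 = 0"
  using linear_onD[OF assms(2) subspace_0 subspace_0, of 0 0] assms(1) by simp

lemma linear_on_diff:
  assumes "linear_on U f" "x \<in> U" "y \<in> U" shows "f (x - y) = f x - f y"
  using linear_onD[OF assms, of 1 "-1"] by simp

lemma linear_on_subset: "linear_on U f \<Longrightarrow> V \<subseteq> U \<Longrightarrow> linear_on V f"
  unfolding linear_on_def by blast

lemma linear_on_sum_scaleR:
  assumes U: "subspace U" and f: "linear_on U f" and S: "finite S" "S \<subseteq> U"
  shows "f (\<Sum>b\<in>S. r b *\<^sub>R b) = (\<Sum>b\<in>S. r b *\<^sub>R f b)"
  using S
proof (induction S rule: finite_induct)
  case empty
  then show ?case using linear_on_0[OF U f] by simp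
next
  case (insert x F)
  have "(\<Sum>b\<in>F. r b *\<^sub>R b) \<in> U"
    using insert U by (intro subspace_sum subspace_scale) auto
  then show ?case
    using insert linear_onD[OF f, of x "\<Sum>b\<in>F. r b *\<^sub>R b" "r x" 1] by simp
qed

lemma linear_on_eq_on_basis:
  assumes U: "subspace U" and A: "finite A" "A \<subseteq> U" "U \<subseteq> span A"
    and f: "linear_on U f" and g: "linear_on U g" and eq: "\<And>b. b \<in> A \<Longrightarrow> f b = g b"
    and x: "x \<in> U"
  shows "f x = g x"
proof -
  obtain r where "x = (\<Sum>b\<in>A. r b *\<^sub>R b)"
    using x A span_finite by blast
  then show ?thesis
    using linear_on_sum_scaleR[OF U f A(1,2)] linear_on_sum_scaleR[OF U g A(1,2)] eq by simp
qed

lemma independent_coefficients_unique: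
  assumes "finite A" "independent A" "(\<Sum>b\<in>A. r b *\<^sub>R b) = (\<Sum>b\<in>A. s b *\<^sub>R b)" "b \<in> A"
  shows "r b = s b"
proof -
  have "(\<Sum>b\<in>A. (r b - s b) *\<^sub>R b) = 0"
    using assms(3) by (simp add: scaleR_diff_left sum_subtractf)
  then have "dependent A" if "r b \<noteq> s b"
    unfolding dependent_finite[OF assms(1)] using that assms(4)
    by (intro exI[of _ "\<lambda>b. r b - s b"]) auto
  then show ?thesis
    using assms(2) by blast
qed

lemma finite_basis_if_linear_embedding:
  assumes U: "subspace U" and N: "linear N" "inj_on N U" and S: "finite S" "N ` U \<subseteq> span S"
  obtains A where "finite A" "A \<subseteq> U" "independent A" "U \<subseteq> span A"
proof -
  obtain A where A: "A \<subseteq> U" "independent A" "U \<subseteq> span A"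
    using maximal_independent_subset[of U] by blast
  have "span A \<subseteq> U"
    using A(1) U by (rule span_minimal)
  then have "independent (N ` A)"
    using linear_independent_injective_image[OF N(1) A(2)] inj_on_subset[OF N(2)] by simp
  moreover have "N ` A \<subseteq> span S"
    using image_mono[OF A(1), of N] S(2) by simp
  ultimately have "finite (N ` A)"
    using independent_span_bound[OF S(1)] by simp
  then have "finite A"
    using finite_imageD inj_on_subset[OF N(2) A(1)] by simp
  with A that show ?thesis by blast
qed

lemma linear_on_inj_imp_surj:
  assumes U: "subspace U" and A: "finite A" "A \<subseteq> U" "independent A" "U \<subseteq> span A"
    and T: "linear_on U T" "T ` U \<subseteq> U" "inj_on T U"
  shows "U \<subseteq> T ` U"
proof -
  have injA: "inj_on T A"
    using inj_on_subset[OF T(3) A(2)] .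
  have sum_U: "(\<Sum>b\<in>A. r b *\<^sub>R b) \<in> U" for r
    using A(2) U by (intro subspace_sum subspace_scale) auto
  have image_sum: "(\<Sum>y\<in>T ` A. c y *\<^sub>R y) = T (\<Sum>b\<in>A. c (T b) *\<^sub>R b)" for c
    using linear_on_sum_scaleR[OF U T(1) A(1,2)] by (simp add: sum.reindex[OF injA])
  have indTA: "independent (T ` A)"
  proof
    assume "dependent (T ` A)"
    then obtain c where c: "\<exists>y\<in>T ` A. c y \<noteq> 0" "(\<Sum>y\<in>T ` A. c y *\<^sub>R y) = 0"
      using dependent_finite[of "T ` A"] A(1) by auto
    have "T (\<Sum>b\<in>A. c (T b) *\<^sub>R b) = T 0"
      using c(2) unfolding image_sum linear_on_0[OF U T(1)] .
    then have "(\<Sum>b\<in>A. c (T b) *\<^sub>R b) = 0"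
      by (rule inj_onD[OF T(3) _ sum_U subspace_0[OF U]])
    then have "dependent A"
      unfolding dependent_finite[OF A(1)] using c(1) by (intro exI[of _ "\<lambda>b. c (T b)"]) auto
    then show False
      using A(3) by contradiction
  qed
  have "T ` A \<subseteq> span A"
    using image_mono[OF A(2), of T] T(2) A(4) by (meson order_trans)
  have "U \<subseteq> span (T ` A)"
  proof
    fix w assume w: "w \<in> U"
    show "w \<in> span (T ` A)"
    proof (rule ccontr)
      assume nw: "w \<notin> span (T ` A)"
      have "insert w (T ` A) \<subseteq> span A"
        using w A(4) \<open>T ` A \<subseteq> span A\<close> by (intro insert_subsetI) auto
      then have "card (insert w (T ` A)) \<le> card A"
        using independent_span_bound[OF A(1) independent_insertI[OF nw indTA]] by simp
      moreover have "w \<notin> T ` A"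
        using nw by (auto intro: span_base)
      ultimately show False
        using card_image[OF injA] A(1) by simp
    qed
  qed
  show "U \<subseteq> T ` U"
  proof
    fix w assume "w \<in> U"
    then have "w \<in> span (T ` A)"
      using \<open>U \<subseteq> span (T ` A)\<close> by blast
    then obtain c where "w = (\<Sum>y\<in>T ` A. c y *\<^sub>R y)"
      using span_finite[of "T ` A"] A(1) by auto
    then have "w = T (\<Sum>b\<in>A. c (T b) *\<^sub>R b)"
      by (simp only: image_sum)
    then show "w \<in> T ` U"
      by (rule rev_image_eqI[OF sum_U])
  qed
qed

lemma unique_solution_if_nondegenerate:
  fixes a :: "'v::real_vector \<Rightarrow> 'v \<Rightarrow> real"
  assumes U: "subspace U" and A: "finite A" "A \<subseteq> U" "independent A" "U \<subseteq> span A"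
    and lin_left: "\<And>v. v \<in> U \<Longrightarrow> linear_on U (\<lambda>u. a u v)"
    and lin_right: "\<And>u. u \<in> U \<Longrightarrow> linear_on U (a u)"
    and F: "linear_on U F"
    and nondeg: "\<And>u. u \<in> U \<Longrightarrow> \<forall>v\<in>U. a u v = 0 \<Longrightarrow> u = 0"
  shows "\<exists>!u. u \<in> U \<and> (\<forall>v\<in>U. a u v = F v)"
proof -
  define T where "T u = (\<Sum>b\<in>A. a u b *\<^sub>R b)" for u
  have sum_U: "(\<Sum>b\<in>A. r b *\<^sub>R b) \<in> U" for r
    using A(2) U by (intro subspace_sum subspace_scale) auto
  have "linear_on U T"
    unfolding linear_on_def
  proof (intro ballI allI)
    fix x y c1 c2 assume x: "x \<in> U" and y: "y \<in> U"
    have "a (c1 *\<^sub>R x + c2 *\<^sub>R y) b = c1 * a x b + c2 * a y b" if "b \<in> A" for b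
      using linear_onD[OF lin_left x y, of b c1 c2] that A(2) by auto
    then show "T (c1 *\<^sub>R x + c2 *\<^sub>R y) = c1 *\<^sub>R T x + c2 *\<^sub>R T y"
      unfolding T_def by (simp add: scaleR_sum_right scaleR_add_left sum.distrib)
  qed
  moreover have "T ` U \<subseteq> U"
    unfolding T_def using sum_U by blast
  moreover have "inj_on T U"
  proof (rule inj_onI)
    fix u u' assume u: "u \<in> U" "u' \<in> U" and eq: "T u = T u'"
    have "a (u - u') b = 0" if "b \<in> A" for b
      using independent_coefficients_unique[OF A(1,3) eq[unfolded T_def] that]
        linear_on_diff[OF lin_left u] that A(2)
      unfolding T_def by auto
    then have "\<forall>v\<in>U. a (u - u') v = 0"
      using linear_on_eq_on_basis[OF U A(1,2,4) lin_right, of "u - u'" "\<lambda>v. 0"]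
        subspace_diff[OF U u]
      by (simp add: linear_on_def)
    then have "u - u' = 0"
      using nondeg subspace_diff[OF U u] by blast
    then show "u = u'"
      by simp
  qed
  ultimately have "U \<subseteq> T ` U"
    by (rule linear_on_inj_imp_surj[OF U A])
  then have "(\<Sum>b\<in>A. F b *\<^sub>R b) \<in> T ` U"
    using sum_U by (rule subsetD)
  then obtain u0 where u0: "u0 \<in> U" "T u0 = (\<Sum>b\<in>A. F b *\<^sub>R b)"
    by (metis imageE)
  have "a u0 v = F v" if "v \<in> U" for v
    by (rule linear_on_eq_on_basis[OF U A(1,2,4) lin_right[OF u0(1)] F
          independent_coefficients_unique[OF A(1,3) u0(2)[unfolded T_def]] that])
  moreover have "u = u0" if "u \<in> U" "\<forall>v\<in>U. a u v = F v" for u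
  proof -
    have "\<forall>v\<in>U. a (u - u0) v = 0"
      using that \<open>\<And>v. v \<in> U \<Longrightarrow> a u0 v = F v\<close> linear_on_diff[OF lin_left _ u0(1)] by simp
    then have "u - u0 = 0"
      using nondeg subspace_diff[OF U that(1) u0(1)] by blast
    then show ?thesis
      by simp
  qed
  ultimately show ?thesis
    using u0(1) by blast
qed

lemma orthogonal_to_spanning_set:
  fixes v :: "'a::real_inner"
  assumes "span S = UNIV" "\<forall>s\<in>S. v \<bullet> s = 0"
  shows "v = 0"
  using orthogonal_to_span[of v S v] assms orthogonal_self by (auto simp: orthogonal_def)

lemma sum_fun_apply: "(\<Sum>x\<in>S. F x) n = (\<Sum>x\<in>S. F x n)"
  by (induction S rule: infinite_finite_induct) auto

lemma finite_support_in_span: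
  fixes f :: "'i \<Rightarrow> 'a::euclidean_space"
  assumes I: "finite I" and supp: "\<And>i. i \<notin> I \<Longrightarrow> f i = 0"
  shows "f \<in> span ((\<lambda>(i, b) n. if n = i then b else 0) ` (I \<times> Basis))"
proof -
  let ?delta = "\<lambda>(i, b) n. if n = i then b else (0 :: 'a)"
  have "f = (\<Sum>i\<in>I. \<Sum>b\<in>Basis. (f i \<bullet> b) *\<^sub>R ?delta (i, b))"
  proof
    fix n
    have "(\<Sum>b\<in>Basis. (f i \<bullet> b) *\<^sub>R ?delta (i, b)) n = (if n = i then f i else 0)" for i
      by (cases "n = i") (simp_all add: sum_fun_apply euclidean_representation)
    then have "(\<Sum>i\<in>I. \<Sum>b\<in>Basis. (f i \<bullet> b) *\<^sub>R ?delta (i, b)) n = (if n \<in> I then f n else 0)"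
      using I by (simp add: sum_fun_apply sum.delta)
    then show "f n = (\<Sum>i\<in>I. \<Sum>b\<in>Basis. (f i \<bullet> b) *\<^sub>R ?delta (i, b)) n"
      using supp by simp
  qed
  also have "\<dots> \<in> span (?delta ` (I \<times> Basis))"
    by (intro span_sum span_scale span_base imageI) simp
  finally show ?thesis .
qed

section \<open>Mesh and piecewise continuous functions\<close>

definition elem :: "nat \<Rightarrow> nat \<Rightarrow> real set" where
  "elem J j = {node J (j - 1)<..<node J j}"

definition elem_closed :: "nat \<Rightarrow> nat \<Rightarrow> real set" where
  "elem_closed J j = {node J (j - 1)..node J j}"

lemma node_less: "J \<ge> 1 \<Longrightarrow> j \<in> {1..J} \<Longrightarrow> node J (j - 1) < node J j"
  by (auto simp: node_def divide_strict_right_mono)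

lemma node_nonneg: "0 \<le> node J k"
  by (simp add: node_def)

lemma node_le_1: "k \<le> J \<Longrightarrow> node J k \<le> 1"
  by (cases "J = 0") (auto simp: node_def)

lemma node_0 [simp]: "node J 0 = 0"
  by (simp add: node_def)

lemma node_J [simp]: "J \<ge> 1 \<Longrightarrow> node J J = 1"
  by (simp add: node_def)

lemma elem_closed_subset: "j \<in> {1..J} \<Longrightarrow> elem_closed J j \<subseteq> {0..1}"
  using node_nonneg[of J "j - 1"] node_le_1[of j J] by (auto simp: elem_closed_def)

lemma elem_subset_closed: "elem J j \<subseteq> elem_closed J j"
  by (auto simp: elem_def elem_closed_def)

lemma elem_subset: "j \<in> {1..J} \<Longrightarrow> elem J j \<subseteq> {0<..<1}"
  using node_nonneg[of J "j - 1"] node_le_1[of j J] by (auto simp: elem_def)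

lemma node_mem_elem_closed:
  assumes "J \<ge> 1" "j \<in> {1..J}"
  shows "node J j \<in> elem_closed J j" "node J (j - 1) \<in> elem_closed J j"
  using node_less[OF assms] by (auto simp: elem_closed_def)

lemma midpoint_mem_elem:
  "J \<ge> 1 \<Longrightarrow> j \<in> {1..J} \<Longrightarrow> (node J (j - 1) + node J j) / 2 \<in> elem J j"
  using node_less[of J j] by (auto simp: elem_def)

lemma mem_elem_if_not_node:
  assumes J: "J \<ge> 1" and x: "x \<in> {0..1}" "x \<notin> node J ` {0..J}"
  shows "\<exists>j\<in>{1..J}. x \<in> elem J j"
proof -
  define k where "k = nat \<lfloor>x * J\<rfloor>"
  have Jpos: "real J > 0"
    using J by simp
  have k: "real k = of_int \<lfloor>x * J\<rfloor>"
    using x(1) unfolding k_def by simp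
  have "real k \<le> x * J" "x * J < real k + 1"
    using k of_int_floor_le[of "x * J"] real_of_int_floor_add_one_gt[of "x * J"] by linarith+
  moreover have xJ: "x * J \<le> real J"
    using mult_right_mono[of x 1 "real J"] x(1) by simp
  moreover have "real k \<noteq> x * J"
  proof
    assume e: "real k = x * J"
    then have "real k \<le> real J"
      using xJ by simp
    moreover have "x = node J k"
      using e Jpos by (simp add: node_def eq_divide_eq)
    ultimately show False
      using x(2) by auto
  qed
  ultimately have "real k < x * J" "k < J" "x * J < real (k + 1)"
    by linarith+
  then have "x \<in> elem J (k + 1)"
    using Jpos by (simp add: elem_def node_def divide_less_eq less_divide_eq)
  then show ?thesis
    using \<open>k < J\<close> by force
qed

lemma mem_elem_closed:
  assumes J: "J \<ge> 1" and x: "x \<in> {0..1}"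
  shows "\<exists>j\<in>{1..J}. x \<in> elem_closed J j"
proof (cases "x \<in> node J ` {0..J}")
  case True
  then obtain k where k: "k \<le> J" "x = node J k"
    by auto
  show ?thesis
  proof (cases "k = 0")
    case True
    then show ?thesis
      using k node_mem_elem_closed(2)[OF J, of 1] J by force
  next
    case False
    then show ?thesis
      using k node_mem_elem_closed(1)[OF J, of k] by force
  qed
next
  case False
  then show ?thesis
    using mem_elem_if_not_node[OF J x] elem_subset_closed by blast
qed

text \<open>Only the open elements matter: values at the nodes are invisible to the quadratures, and
  the derivative \<open>Xrho\<close> of a finite element function is junk there.\<close>

definition piecewise_cont :: "nat \<Rightarrow> (real \<Rightarrow> 'a::topological_space) \<Rightarrow> bool" where
  "piecewise_cont J h \<longleftrightarrow>
     (\<forall>j\<in>{1..J}. \<exists>g. continuous_on (elem_closed J j) g \<and> (\<forall>x\<in>elem J j. h x = g x))"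

definition piecewise_const :: "nat \<Rightarrow> (real \<Rightarrow> 'a) \<Rightarrow> bool" where
  "piecewise_const J h \<longleftrightarrow> (\<forall>j\<in>{1..J}. \<exists>c. \<forall>x\<in>elem J j. h x = c)"

definition elemwise_eq :: "nat \<Rightarrow> (real \<Rightarrow> 'a) \<Rightarrow> (real \<Rightarrow> 'a) \<Rightarrow> bool" where
  "elemwise_eq J h h' \<longleftrightarrow> (\<forall>j\<in>{1..J}. \<forall>x\<in>elem J j. h x = h' x)"

lemma piecewise_const_comp: "piecewise_const J h \<Longrightarrow> piecewise_const J (\<lambda>x. f (h x))"
  unfolding piecewise_const_def by metis

lemma piecewise_cont_if_const: "piecewise_const J h \<Longrightarrow> piecewise_cont J h"
  unfolding piecewise_const_def piecewise_cont_def by (metis continuous_on_const)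

lemma piecewise_cont_if_continuous:
  "continuous_on {0..1} h \<Longrightarrow> piecewise_cont J h"
  unfolding piecewise_cont_def using continuous_on_subset elem_closed_subset by blast

lemma piecewise_cont_binop:
  assumes f: "piecewise_cont J f" and g: "piecewise_cont J g"
    and op: "\<And>(S :: real set) a b. continuous_on S a \<Longrightarrow> continuous_on S b
              \<Longrightarrow> continuous_on S (\<lambda>x. op (a x) (b x))"
  shows "piecewise_cont J (\<lambda>x. op (f x) (g x))"
  unfolding piecewise_cont_def
proof
  fix j assume j: "j \<in> {1..J}"
  obtain a where a: "continuous_on (elem_closed J j) a" "\<forall>x\<in>elem J j. f x = a x"
    using f j unfolding piecewise_cont_def by blast
  obtain b where b: "continuous_on (elem_closed J j) b" "\<forall>x\<in>elem J j. g x = b x"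
    using g j unfolding piecewise_cont_def by blast
  show "\<exists>c. continuous_on (elem_closed J j) c \<and> (\<forall>x\<in>elem J j. op (f x) (g x) = c x)"
    using op[OF a(1) b(1)] a(2) b(2) by (intro exI[of _ "\<lambda>x. op (a x) (b x)"]) simp
qed

lemma piecewise_cont_mult:
  "piecewise_cont J (f :: real \<Rightarrow> real) \<Longrightarrow> piecewise_cont J g \<Longrightarrow> piecewise_cont J (\<lambda>x. f x * g x)"
  by (rule piecewise_cont_binop[where op = "(*)"]) (auto intro: continuous_on_mult)

lemma piecewise_cont_scaleR:
  "piecewise_cont J (f :: real \<Rightarrow> real) \<Longrightarrow> piecewise_cont J (g :: real \<Rightarrow> 'a::real_normed_vector)
    \<Longrightarrow> piecewise_cont J (\<lambda>x. f x *\<^sub>R g x)"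
  by (rule piecewise_cont_binop[where op = "(*\<^sub>R)"]) (auto intro: continuous_on_scaleR)

lemma piecewise_cont_inner:
  "piecewise_cont J (f :: real \<Rightarrow> 'a::real_inner) \<Longrightarrow> piecewise_cont J g
    \<Longrightarrow> piecewise_cont J (\<lambda>x. f x \<bullet> g x)"
  by (rule piecewise_cont_binop[where op = "(\<bullet>)"]) (auto intro: continuous_on_inner)

lemma piecewise_cont_const: "piecewise_cont J (\<lambda>x. c)"
  by (rule piecewise_cont_if_continuous) simp

lemmas piecewise_cont_intros =
  piecewise_cont_mult piecewise_cont_scaleR piecewise_cont_inner piecewise_cont_const

lemma piecewise_cont_tendsto_at_left:
  assumes J: "J \<ge> 1" and j: "j \<in> {1..J}" and g: "continuous_on (elem_closed J j) g"
    and hg: "\<forall>x\<in>elem J j. h x = g x"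
  shows "(h \<longlongrightarrow> g (node J j)) (at_left (node J j))"
proof -
  have lt: "node J (j - 1) < node J j"
    using node_less[OF J j] .
  have "(g \<longlongrightarrow> g (node J j)) (at_left (node J j))"
    using g lt at_within_Icc_at_left[OF lt]
    unfolding continuous_on_def elem_closed_def by (metis atLeastAtMost_iff order_refl less_imp_le)
  moreover have "eventually (\<lambda>x. h x = g x) (at_left (node J j))"
    using eventually_at_left_real[OF lt] hg by (auto simp: elem_def elim: eventually_mono)
  ultimately show ?thesis
    using tendsto_cong by blast
qed

lemma piecewise_cont_tendsto_at_right:
  assumes J: "J \<ge> 1" and j: "j \<in> {1..J}" and g: "continuous_on (elem_closed J j) g"
    and hg: "\<forall>x\<in>elem J j. h x = g x"
  shows "(h \<longlongrightarrow> g (node J (j - 1))) (at_right (node J (j - 1)))"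
proof -
  have lt: "node J (j - 1) < node J j"
    using node_less[OF J j] .
  have "(g \<longlongrightarrow> g (node J (j - 1))) (at_right (node J (j - 1)))"
    using g lt at_within_Icc_at_right[OF lt]
    unfolding continuous_on_def elem_closed_def by (metis atLeastAtMost_iff order_refl less_imp_le)
  moreover have "eventually (\<lambda>x. h x = g x) (at_right (node J (j - 1)))"
    using eventually_at_right_real[OF lt] hg by (auto simp: elem_def elim: eventually_mono)
  ultimately show ?thesis
    using tendsto_cong by blast
qed

lemma piecewise_cont_convergent_at_nodes:
  assumes "J \<ge> 1" "j \<in> {1..J}" "piecewise_cont J h"
  shows "(h \<longlongrightarrow> Lim (at_left (node J j)) h) (at_left (node J j))"
    and "(h \<longlongrightarrow> Lim (at_right (node J (j - 1))) h) (at_right (node J (j - 1)))"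
  using assms piecewise_cont_tendsto_at_left piecewise_cont_tendsto_at_right tendsto_Lim
  unfolding piecewise_cont_def by (metis trivial_limit_at_left_real trivial_limit_at_right_real)+

lemma Lim_at_left_node:
  assumes "J \<ge> 1" "j \<in> {1..J}" "continuous_on (elem_closed J j) g" "\<forall>x\<in>elem J j. h x = g x"
  shows "Lim (at_left (node J j)) h = g (node J j)"
  using tendsto_Lim[OF _ piecewise_cont_tendsto_at_left[OF assms]] by simp

lemma Lim_at_right_node:
  assumes "J \<ge> 1" "j \<in> {1..J}" "continuous_on (elem_closed J j) g" "\<forall>x\<in>elem J j. h x = g x"
  shows "Lim (at_right (node J (j - 1))) h = g (node J (j - 1))"
  using tendsto_Lim[OF _ piecewise_cont_tendsto_at_right[OF assms]] by simp

section \<open>Quadrature\<close>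

definition lumped_integral :: "nat \<Rightarrow> (real \<Rightarrow> real) \<Rightarrow> real" where
  "lumped_integral J h = (1 / real J) / 2 * (\<Sum>j\<in>{1..J}.
      Lim (at_left (node J j)) h + Lim (at_right (node J (j - 1))) h)"

definition integral_sharp :: "bool \<Rightarrow> nat \<Rightarrow> (real \<Rightarrow> real) \<Rightarrow> real" where
  "integral_sharp lumped J h = (if lumped then lumped_integral J h else integral {0..1} h)"

lemma ip_sharp_eq_integral_sharp: "ip_sharp lumped J f g = integral_sharp lumped J (\<lambda>x. f x \<bullet> g x)"
  by (simp add: ip_sharp_def integral_sharp_def ip_lump_def lumped_integral_def ip_def)

lemma ip_eq_ip_sharp: "ip f g = ip_sharp False J f g"
  by (simp add: ip_sharp_def)

lemma integral_sharp_cong: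
  assumes J: "J \<ge> 1" and eq: "elemwise_eq J h h'"
  shows "integral_sharp lumped J h = integral_sharp lumped J h'"
proof -
  have "Lim (at_left (node J j)) h = Lim (at_left (node J j)) h'"
    "Lim (at_right (node J (j - 1))) h = Lim (at_right (node J (j - 1))) h'"
    if j: "j \<in> {1..J}" for j
  proof -
    have lt: "node J (j - 1) < node J j"
      using node_less[OF J j] .
    have "eventually (\<lambda>x. h x = h' x) (at_left (node J j))"
      "eventually (\<lambda>x. h x = h' x) (at_right (node J (j - 1)))"
      using eventually_at_left_real[OF lt] eventually_at_right_real[OF lt] eq j
      by (auto simp: elem_def elemwise_eq_def elim: eventually_mono)
    then show "Lim (at_left (node J j)) h = Lim (at_left (node J j)) h'"
      "Lim (at_right (node J (j - 1))) h = Lim (at_right (node J (j - 1))) h'"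
      by (auto intro: Lim_cong)
  qed
  moreover have "integral {0..1} h = integral {0..1} h'"
  proof (rule integral_spike[of "node J ` {0..J}"])
    fix x assume "x \<in> {0..1::real} - node J ` {0..J}"
    then show "h' x = h x"
      using mem_elem_if_not_node[OF J] eq by (force simp: elemwise_eq_def)
  qed (rule negligible_finite, simp)
  ultimately show ?thesis
    by (simp add: integral_sharp_def lumped_integral_def)
qed

lemma piecewise_cont_integrable:
  assumes J: "J \<ge> 1" and h: "piecewise_cont J (h :: real \<Rightarrow> real)"
  shows "h integrable_on {0..1}"
proof -
  have "h integrable_on {0..node J k}" if "k \<le> J" for k
    using that
  proof (induction k)
    case 0
    then show ?case
      using integrable_on_refl[of h 0] by simp
  next
    case (Suc k)
    then have j: "Suc k \<in> {1..J}"
      by simp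
    obtain g where g: "continuous_on (elem_closed J (Suc k)) g" "\<forall>x\<in>elem J (Suc k). h x = g x"
      using h j unfolding piecewise_cont_def by blast
    have "g integrable_on {node J k..node J (Suc k)}"
      using g(1) integrable_continuous_interval by (simp add: elem_closed_def)
    then have "h integrable_on {node J k..node J (Suc k)}"
      by (rule integrable_spike_finite[of "{node J k, node J (Suc k)}", rotated 2])
         (use g(2) in \<open>auto simp: elem_def\<close>)
    moreover have "node J k \<le> node J (Suc k)"
      using node_less[OF J j] by simp
    ultimately show ?case
      using Suc Henstock_Kurzweil_Integration.integrable_combine[OF node_nonneg] by simp
  qed
  from this[of J] show ?thesis
    using J by simp
qed

lemma integral_sharp_lincomb:
  assumes J: "J \<ge> 1" and h1: "piecewise_cont J h1" and h2: "piecewise_cont J h2"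
    and eq: "elemwise_eq J h (\<lambda>x. a * h1 x + b * h2 x)"
  shows "integral_sharp lumped J h
    = a * integral_sharp lumped J h1 + b * integral_sharp lumped J h2"
proof -
  have "integral_sharp lumped J h = integral_sharp lumped J (\<lambda>x. a * h1 x + b * h2 x)"
    using integral_sharp_cong[OF J eq] .
  also have "\<dots> = a * integral_sharp lumped J h1 + b * integral_sharp lumped J h2"
  proof (cases lumped)
    case True
    have lim_comb: "Lim F (\<lambda>x. a * h1 x + b * h2 x) = a * Lim F h1 + b * Lim F h2"
      if "(h1 \<longlongrightarrow> Lim F h1) F" "(h2 \<longlongrightarrow> Lim F h2) F" "F \<noteq> bot" for F
      using that by (intro tendsto_Lim tendsto_intros)
    have "(\<Sum>j\<in>{1..J}. Lim (at_left (node J j)) (\<lambda>x. a * h1 x + b * h2 x)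
            + Lim (at_right (node J (j - 1))) (\<lambda>x. a * h1 x + b * h2 x))
        = (\<Sum>j\<in>{1..J}. a * (Lim (at_left (node J j)) h1 + Lim (at_right (node J (j - 1))) h1)
            + b * (Lim (at_left (node J j)) h2 + Lim (at_right (node J (j - 1))) h2))"
    proof (rule sum.cong[OF refl])
      fix j assume j: "j \<in> {1..J}"
      show "Lim (at_left (node J j)) (\<lambda>x. a * h1 x + b * h2 x)
            + Lim (at_right (node J (j - 1))) (\<lambda>x. a * h1 x + b * h2 x)
          = a * (Lim (at_left (node J j)) h1 + Lim (at_right (node J (j - 1))) h1)
            + b * (Lim (at_left (node J j)) h2 + Lim (at_right (node J (j - 1))) h2)"
        using lim_comb[OF piecewise_cont_convergent_at_nodes(1)[OF J j h1]
            piecewise_cont_convergent_at_nodes(1)[OF J j h2]]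
          lim_comb[OF piecewise_cont_convergent_at_nodes(2)[OF J j h1]
            piecewise_cont_convergent_at_nodes(2)[OF J j h2]]
        by (simp add: algebra_simps)
    qed
    then show ?thesis
      using True unfolding integral_sharp_def lumped_integral_def
      by (simp add: sum.distrib sum_distrib_left algebra_simps)
  next
    case False
    have "h1 integrable_on {0..1}" "h2 integrable_on {0..1}"
      using piecewise_cont_integrable[OF J] h1 h2 by auto
    then show ?thesis
      using False integral_add[OF integrable_on_cmult_left integrable_on_cmult_left, of h1 _ h2 a b]
      by (simp add: integral_sharp_def)
  qed
  finally show ?thesis .
qed

lemma integral_sharp_scale:
  assumes J: "J \<ge> 1" and h1: "piecewise_cont J h1" and eq: "elemwise_eq J h (\<lambda>x. a * h1 x)"
  shows "integral_sharp lumped J h = a * integral_sharp lumped J h1"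
  using integral_sharp_lincomb[OF J h1 h1, of h a 0] eq by (simp add: elemwise_eq_def)

lemma Lim_at_nodes_nonneg:
  fixes h :: "real \<Rightarrow> real"
  assumes J: "J \<ge> 1" and j: "j \<in> {1..J}" and h: "piecewise_cont J h"
    and nonneg: "\<forall>x\<in>{0..1}. 0 \<le> h x"
  shows "0 \<le> Lim (at_left (node J j)) h" "0 \<le> Lim (at_right (node J (j - 1))) h"
proof -
  have lt: "node J (j - 1) < node J j"
    using node_less[OF J j] .
  have ev: "eventually (\<lambda>x. 0 \<le> h x) (at_left (node J j))"
    "eventually (\<lambda>x. 0 \<le> h x) (at_right (node J (j - 1)))"
    using eventually_at_left_real[OF lt] eventually_at_right_real[OF lt] nonneg elem_subset[OF j]
    by (auto simp: elem_def elim!: eventually_mono)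
  show "0 \<le> Lim (at_left (node J j)) h"
    by (rule tendsto_lowerbound[OF piecewise_cont_convergent_at_nodes(1)[OF J j h] ev(1)]) simp
  show "0 \<le> Lim (at_right (node J (j - 1))) h"
    by (rule tendsto_lowerbound[OF piecewise_cont_convergent_at_nodes(2)[OF J j h] ev(2)]) simp
qed

lemma integral_sharp_nonneg:
  assumes J: "J \<ge> 1" and h: "piecewise_cont J h" and nonneg: "\<forall>x\<in>{0..1}. 0 \<le> h x"
  shows "0 \<le> integral_sharp lumped J h"
proof (cases lumped)
  case True
  have "0 \<le> (\<Sum>j\<in>{1..J}. Lim (at_left (node J j)) h + Lim (at_right (node J (j - 1))) h)"
  proof (rule sum_nonneg)
    fix j assume "j \<in> {1..J}"
    then show "0 \<le> Lim (at_left (node J j)) h + Lim (at_right (node J (j - 1))) h"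
      using Lim_at_nodes_nonneg[OF J _ h nonneg] by (simp add: add_nonneg_nonneg)
  qed
  then show ?thesis
    using True by (simp add: integral_sharp_def lumped_integral_def)
next
  case False
  then show ?thesis
    using piecewise_cont_integrable[OF J h] nonneg
    by (auto simp: integral_sharp_def intro!: integral_nonneg)
qed

lemma lumped_integral_eq_0_imp_Lim_0:
  assumes J: "J \<ge> 1" and h: "piecewise_cont J h" and nonneg: "\<forall>x\<in>{0..1}. 0 \<le> h x"
    and zero: "lumped_integral J h = 0" and j: "j \<in> {1..J}"
  shows "Lim (at_left (node J j)) h = 0" "Lim (at_right (node J (j - 1))) h = 0"
proof -
  have terms_nonneg: "\<And>i. i \<in> {1..J} \<Longrightarrow>
      0 \<le> Lim (at_left (node J i)) h + Lim (at_right (node J (i - 1))) h"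
    using Lim_at_nodes_nonneg[OF J _ h nonneg] by (simp add: add_nonneg_nonneg)
  have sum0: "(\<Sum>i\<in>{1..J}. Lim (at_left (node J i)) h + Lim (at_right (node J (i - 1))) h) = 0"
    using zero J by (simp add: lumped_integral_def)
  have "\<forall>i\<in>{1..J}. Lim (at_left (node J i)) h + Lim (at_right (node J (i - 1))) h = 0"
    by (rule sum_nonneg_eq_0_iff[THEN iffD1, OF finite_atLeastAtMost terms_nonneg sum0])
  then have "Lim (at_left (node J j)) h + Lim (at_right (node J (j - 1))) h = 0"
    using j by blast
  then show "Lim (at_left (node J j)) h = 0" "Lim (at_right (node J (j - 1))) h = 0"
    using Lim_at_nodes_nonneg[OF J j h nonneg] by linarith+
qed

lemma integral_eq_0_imp_zero_on_elem:
  fixes h :: "real \<Rightarrow> real"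
  assumes J: "J \<ge> 1" and h: "piecewise_cont J h" and nonneg: "\<forall>x\<in>{0..1}. 0 \<le> h x"
    and zero: "integral {0..1} h = 0" and j: "j \<in> {1..J}" and x: "x \<in> elem J j"
  shows "h x = 0"
proof -
  obtain g where g: "continuous_on (elem_closed J j) g" "\<forall>y\<in>elem J j. h y = g y"
    using h j unfolding piecewise_cont_def by blast
  define a b where "a = node J (j - 1)" and "b = node J j"
  have cbox: "cbox a b = elem_closed J j" and box: "box a b = elem J j"
    by (simp_all add: a_def b_def elem_closed_def elem_def)
  have spike: "\<And>y. y \<in> cbox a b - {a, b} \<Longrightarrow> h y = g y"
    using g(2) by (auto simp: a_def b_def elem_def)
  have "g integrable_on cbox a b"
    using integrable_continuous[of a b g] g(1) cbox by simp
  then have hint: "h integrable_on cbox a b"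
    by (rule integrable_spike_finite[of "{a, b}", rotated 2]) (use spike in auto)
  have sub: "cbox a b \<subseteq> {0..1}"
    using cbox elem_closed_subset[OF j] by simp
  have "integral (cbox a b) h \<le> integral {0..1} h"
    using integral_subset_le[OF sub hint piecewise_cont_integrable[OF J h]] nonneg by blast
  moreover have "0 \<le> integral (cbox a b) h"
    using integral_nonneg[OF hint] nonneg sub by blast
  moreover have "integral (cbox a b) g = integral (cbox a b) h"
    by (rule integral_spike[of "{a, b}"]) (use spike in auto)
  ultimately have "integral (cbox a b) g = 0"
    using zero by linarith
  then have int0: "(g has_integral 0) (cbox a b)"
    using integrable_integral[OF \<open>g integrable_on cbox a b\<close>] by simp
  have pos: "0 \<le> g y" if "y \<in> box a b" for y
  proof -
    have "y \<in> elem J j"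
      using that unfolding box .
    moreover have "y \<in> {0..1}"
      using \<open>y \<in> elem J j\<close> elem_subset[OF j] by auto
    ultimately show ?thesis
      using g(2) nonneg by metis
  qed
  have "continuous_on (cbox a b) g" "box a b \<noteq> {}" "x \<in> cbox a b"
    using g(1) x box cbox elem_subset_closed[of J j] by auto
  then have "g x = 0"
    using has_integral_0_cbox_imp_0[OF _ pos int0] by blast
  then show ?thesis
    using g(2) x by simp
qed

lemma ip_sharp_commute: "ip_sharp lumped J f g = ip_sharp lumped J g f"
  by (simp add: ip_sharp_eq_integral_sharp inner_commute)

lemma ip_sharp_lincomb_left:
  assumes J: "J \<ge> 1" and pc: "piecewise_cont J f1" "piecewise_cont J f2" "piecewise_cont J g"
    and eq: "elemwise_eq J f (\<lambda>x. a *\<^sub>R f1 x + b *\<^sub>R f2 x)"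
  shows "ip_sharp lumped J f g = a * ip_sharp lumped J f1 g + b * ip_sharp lumped J f2 g"
  unfolding ip_sharp_eq_integral_sharp
  by (rule integral_sharp_lincomb[OF J piecewise_cont_inner[OF pc(1,3)]
        piecewise_cont_inner[OF pc(2,3)]])
    (use eq in \<open>simp add: elemwise_eq_def inner_add_left\<close>)

lemma ip_sharp_lincomb_right:
  assumes J: "J \<ge> 1" and pc: "piecewise_cont J f" "piecewise_cont J g1" "piecewise_cont J g2"
    and eq: "elemwise_eq J g (\<lambda>x. a *\<^sub>R g1 x + b *\<^sub>R g2 x)"
  shows "ip_sharp lumped J f g = a * ip_sharp lumped J f g1 + b * ip_sharp lumped J f g2"
  using ip_sharp_lincomb_left[OF J pc(2,3,1) eq] by (simp add: ip_sharp_commute[of _ _ f])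

lemma ip_sharp_eq_0:
  assumes "\<And>x. f x \<bullet> g x = 0" shows "ip_sharp lumped J f g = 0"
proof -
  have "Lim (at_left a) (\<lambda>x. 0 :: real) = 0" "Lim (at_right a) (\<lambda>x. 0 :: real) = 0" for a :: real
    by (auto intro!: tendsto_Lim)
  then show ?thesis
    using assms by (simp add: ip_sharp_eq_integral_sharp integral_sharp_def lumped_integral_def)
qed

section \<open>Finite element spaces\<close>

lemma zero_in_Vh: "0 \<in> Vh p J"
  unfolding Vh_def zero_fun_def by (auto intro!: exI[of _ "0::real"])

lemma Vh_add: "f \<in> Vh p J \<Longrightarrow> g \<in> Vh p J \<Longrightarrow> f + g \<in> Vh p J"
proof -
  assume f: "f \<in> Vh p J" and g: "g \<in> Vh p J"
  have aff: "\<exists>a b. \<forall>x\<in>{node J (j - 1)..node J j}. f x + g x = a * x + b" if j: "j \<in> {1..J}" for j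
  proof -
    obtain a1 b1 where 1: "\<forall>x\<in>{node J (j - 1)..node J j}. f x = a1 * x + b1"
      using f j unfolding Vh_def by blast
    obtain a2 b2 where 2: "\<forall>x\<in>{node J (j - 1)..node J j}. g x = a2 * x + b2"
      using g j unfolding Vh_def by blast
    show ?thesis
      using 1 2 by (intro exI[of _ "a1 + a2"] exI[of _ "b1 + b2"]) (simp add: algebra_simps)
  qed
  have "(\<lambda>x. f x + g x) \<in> Vh p J"
    using f g aff unfolding Vh_def by (auto intro: continuous_on_add)
  then show ?thesis
    by (simp add: plus_fun_def)
qed

lemma Vh_scale: "f \<in> Vh p J \<Longrightarrow> c *\<^sub>R f \<in> Vh p J"
proof -
  assume f: "f \<in> Vh p J"
  have aff: "\<exists>a b. \<forall>x\<in>{node J (j - 1)..node J j}. c * f x = a * x + b" if j: "j \<in> {1..J}" for j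
  proof -
    obtain a1 b1 where 1: "\<forall>x\<in>{node J (j - 1)..node J j}. f x = a1 * x + b1"
      using f j unfolding Vh_def by blast
    show ?thesis
      using 1 by (intro exI[of _ "c * a1"] exI[of _ "c * b1"]) (simp add: algebra_simps)
  qed
  have "(\<lambda>x. c * f x) \<in> Vh p J"
    using f aff unfolding Vh_def by (auto intro: continuous_on_mult)
  then show ?thesis
    by (simp add: scaleR_fun_def)
qed

lemma subspace_Vh: "subspace (Vh p J)"
  by (simp add: subspace_def zero_in_Vh Vh_add Vh_scale)

lemma subspace_VVh: "subspace (VVh p J)"
proof -
  have "(\<lambda>x. (X + Y) x $ i) = (\<lambda>x. X x $ i) + (\<lambda>x. Y x $ i)"
    "(\<lambda>x. (c *\<^sub>R X) x $ i) = c *\<^sub>R (\<lambda>x. X x $ i)"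
    "(\<lambda>x. (0 :: real \<Rightarrow> real^2) x $ i) = 0"
    for X Y :: "real \<Rightarrow> real^2" and c i
    by (simp_all add: fun_eq_iff)
  then show ?thesis
    unfolding subspace_def VVh_def by (simp add: zero_in_Vh Vh_add Vh_scale)
qed

lemma subspace_VVhD: "subspace (VVhD p J dD d0 d1 d2)"
  using subspace_VVh[of p J] unfolding subspace_def VVhD_def VVh0_def
  by (simp add: inner_add_left)

lemma subspace_W_sharp: "subspace (W_sharp lumped p J d0)"
  using subspace_Vh[of p J] unfolding subspace_def W_sharp_def Wh0_def by simp

lemma VVhD_subset_VVh: "VVhD p J dD d0 d1 d2 \<subseteq> VVh p J"
  by (auto simp: VVhD_def VVh0_def)

lemma W_sharp_subset_Vh: "W_sharp lumped p J d0 \<subseteq> Vh p J"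
  by (auto simp: W_sharp_def Wh0_def)

lemma Vh_continuous: "f \<in> Vh p J \<Longrightarrow> continuous_on {0..1} f"
  by (simp add: Vh_def)

lemma Vh_affine_on_elem:
  "f \<in> Vh p J \<Longrightarrow> j \<in> {1..J} \<Longrightarrow> \<exists>a b. \<forall>x\<in>elem_closed J j. f x = a * x + b"
  by (simp add: Vh_def elem_closed_def)

lemma VVh_continuous:
  assumes "X \<in> VVh p J" shows "continuous_on {0..1} X"
proof -
  have "continuous_on {0..1} (\<lambda>x. \<chi> i. X x $ i)"
    using assms Vh_continuous by (intro continuous_on_vec_lambda) (auto simp: VVh_def)
  then show ?thesis
    by simp
qed

lemma VVh_outside: "X \<in> VVh p J \<Longrightarrow> x \<notin> {0..1} \<Longrightarrow> X x = 0"
  by (simp add: VVh_def Vh_def vec_eq_iff)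

lemma VVh_affine_on_elem:
  assumes X: "X \<in> VVh p J" and j: "j \<in> {1..J}"
  shows "\<exists>A B. \<forall>x\<in>elem_closed J j. X x = x *\<^sub>R A + B"
proof -
  have "\<forall>i. \<exists>ab. \<forall>x\<in>elem_closed J j. X x $ i = fst ab * x + snd ab"
    using Vh_affine_on_elem[OF _ j] X unfolding VVh_def by fastforce
  then obtain ab where ab: "\<forall>i. \<forall>x\<in>elem_closed J j. X x $ i = fst (ab i) * x + snd (ab i)"
    by (rule choice[THEN exE])
  show ?thesis
    using ab by (intro exI[of _ "\<chi> i. fst (ab i)"] exI[of _ "\<chi> i. snd (ab i)"])
      (auto simp: vec_eq_iff)
qed

lemma Vh_eq_0_if_nodes_eq_0:
  assumes J: "J \<ge> 1" and f: "f \<in> Vh p J" and nodes: "\<forall>k\<le>J. f (node J k) = 0"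
  shows "f x = 0"
proof (cases "x \<in> {0..1}")
  case False
  then show ?thesis
    using f by (simp add: Vh_def)
next
  case True
  then obtain j where j: "j \<in> {1..J}" "x \<in> elem_closed J j"
    using mem_elem_closed[OF J] by blast
  obtain a b where ab: "\<forall>y\<in>elem_closed J j. f y = a * y + b"
    using Vh_affine_on_elem[OF f j(1)] by blast
  have e: "a * node J (j - 1) + b = 0" "a * node J j + b = 0"
    using ab nodes node_mem_elem_closed[OF J j(1)] j(1) by force+
  have "a * (node J j - node J (j - 1)) = (a * node J j + b) - (a * node J (j - 1) + b)"
    by (simp add: algebra_simps)
  then have "a * (node J j - node J (j - 1)) = 0"
    using e by simp
  moreover have "node J j - node J (j - 1) \<noteq> 0"
    using node_less[OF J j(1)] by simp
  ultimately have "a = 0" "b = 0"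
    using e by simp_all
  then show ?thesis
    using ab j(2) by simp
qed

lemma VVh_eq_0_if_nodes_eq_0:
  assumes J: "J \<ge> 1" and X: "X \<in> VVh p J" and nodes: "\<forall>k\<le>J. X (node J k) = 0"
  shows "X x = 0"
  using Vh_eq_0_if_nodes_eq_0[OF J, of "\<lambda>x. X x $ i" p x for i] X nodes
  by (simp add: VVh_def vec_eq_iff)

lemma Xrho_affine:
  assumes x: "x \<in> elem J j" and X: "\<forall>y\<in>elem_closed J j. X y = y *\<^sub>R A + B"
  shows "Xrho X x = A"
proof -
  have "((\<lambda>y. y *\<^sub>R A + B) has_vector_derivative A) (at x)"
    unfolding has_vector_derivative_def by (auto intro!: derivative_eq_intros)
  moreover have "open (elem J j)"
    by (simp add: elem_def)
  ultimately have "(X has_vector_derivative A) (at x)"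
  proof (rule has_vector_derivative_transform_within_open[OF _ _ x])
    fix y assume "y \<in> elem J j"
    then have "y \<in> elem_closed J j"
      using elem_subset_closed by blast
    then show "y *\<^sub>R A + B = X y"
      using X by simp
  qed
  then show ?thesis
    unfolding Xrho_def by (rule vector_derivative_at)
qed

lemma piecewise_const_Xrho:
  assumes X: "X \<in> VVh p J" shows "piecewise_const J (Xrho X)"
  unfolding piecewise_const_def
proof
  fix j assume "j \<in> {1..J}"
  then obtain A B where AB: "\<forall>y\<in>elem_closed J j. X y = y *\<^sub>R A + B"
    using VVh_affine_on_elem[OF X] by blast
  show "\<exists>c. \<forall>x\<in>elem J j. Xrho X x = c"
    using Xrho_affine[OF _ AB] by (intro exI[of _ A] ballI)
qed

lemma Xrho_lincomb:
  assumes f: "f \<in> VVh p J" and g: "g \<in> VVh p J"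
  shows "elemwise_eq J (Xrho (a *\<^sub>R f + b *\<^sub>R g)) (\<lambda>x. a *\<^sub>R Xrho f x + b *\<^sub>R Xrho g x)"
  unfolding elemwise_eq_def
proof (intro ballI)
  fix j x assume j: "j \<in> {1..J}" and x: "x \<in> elem J j"
  obtain A B where A: "\<forall>y\<in>elem_closed J j. f y = y *\<^sub>R A + B"
    using VVh_affine_on_elem[OF f j] by blast
  obtain A' B' where A': "\<forall>y\<in>elem_closed J j. g y = y *\<^sub>R A' + B'"
    using VVh_affine_on_elem[OF g j] by blast
  have "\<forall>y\<in>elem_closed J j.
      (a *\<^sub>R f + b *\<^sub>R g) y = y *\<^sub>R (a *\<^sub>R A + b *\<^sub>R A') + (a *\<^sub>R B + b *\<^sub>R B')"
    using A A' by (simp add: algebra_simps)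
  then have "Xrho (a *\<^sub>R f + b *\<^sub>R g) x = a *\<^sub>R A + b *\<^sub>R A'"
    by (rule Xrho_affine[OF x])
  then show "Xrho (a *\<^sub>R f + b *\<^sub>R g) x = a *\<^sub>R Xrho f x + b *\<^sub>R Xrho g x"
    using Xrho_affine[OF x A] Xrho_affine[OF x A'] by simp
qed

text \<open>Assumption (A) holds almost everywhere, and the derivative is constant on each element,
  which has positive measure.\<close>

lemma norm_Xrho_pos:
  assumes J: "J \<ge> 1" and X: "X \<in> VVh p J" and A: "assmA d0 X" and j: "j \<in> {1..J}"
    and x: "x \<in> elem J j"
  shows "0 < norm (Xrho X x)"
proof (rule ccontr)
  assume "\<not> 0 < norm (Xrho X x)"
  obtain c where c: "\<forall>y\<in>elem J j. Xrho X y = c"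
    using piecewise_const_Xrho[OF X] j unfolding piecewise_const_def by blast
  then have zero: "\<forall>y\<in>elem J j. Xrho X y = 0"
    using \<open>\<not> 0 < norm (Xrho X x)\<close> x by simp
  obtain N where N: "N \<in> null_sets lborel"
    "{y \<in> space lborel. \<not> (y \<in> {0..1} \<longrightarrow> 0 < norm (Xrho X y))} \<subseteq> N"
    using A unfolding assmA_def eventually_ae_filter by blast
  have "elem J j \<subseteq> N"
  proof
    fix y assume y: "y \<in> elem J j"
    then have "y \<in> {0..1}"
      using elem_subset[OF j] by auto
    then have "y \<in> {y \<in> space lborel. \<not> (y \<in> {0..1} \<longrightarrow> 0 < norm (Xrho X y))}"
      using zero y by simp
    then show "y \<in> N"
      using N(2) by blast
  qed
  then have "emeasure lborel (elem J j) \<le> emeasure lborel N"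
    by (rule emeasure_mono[OF _ null_setsD2[OF N(1)]])
  then have "emeasure lborel (elem J j) = 0"
    using null_setsD1[OF N(1)] by simp
  moreover have "emeasure lborel (elem J j) = ennreal (node J j - node J (j - 1))"
    using node_less[OF J j] by (simp add: elem_def)
  ultimately show False
    using node_less[OF J j] by simp
qed

lemma Xrho_zero: "Xrho 0 x = 0"
  by (simp add: Xrho_def zero_fun_def)

lemma Vh_eq_0_if_zero_on_elems:
  assumes J: "J \<ge> 1" and f: "f \<in> Vh p J" and zero: "\<forall>j\<in>{1..J}. \<forall>x\<in>elem J j. f x = 0"
  shows "f x = 0"
proof (rule Vh_eq_0_if_nodes_eq_0[OF J f], intro allI impI)
  have cont: "continuous_on (elem_closed J j) f" if "j \<in> {1..J}" for j
    using continuous_on_subset[OF Vh_continuous[OF f] elem_closed_subset[OF that]] .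
  fix k assume k: "k \<le> J"
  show "f (node J k) = 0"
  proof (cases "k = 0")
    case True
    have j: "1 \<in> {1..J}"
      using J by simp
    have "Lim (at_right (node J (1 - 1))) f = f (node J (1 - 1))"
      by (rule Lim_at_right_node[OF J j cont[OF j]]) simp
    moreover have "Lim (at_right (node J (1 - 1))) f = 0"
      by (rule Lim_at_right_node[OF J j continuous_on_const]) (use zero j in auto)
    ultimately show ?thesis
      using True by simp
  next
    case False
    then have j: "k \<in> {1..J}"
      using k by simp
    have "Lim (at_left (node J k)) f = f (node J k)"
      by (rule Lim_at_left_node[OF J j cont[OF j]]) simp
    moreover have "Lim (at_left (node J k)) f = 0"
      by (rule Lim_at_left_node[OF J j continuous_on_const]) (use zero j in auto)
    ultimately show ?thesis
      by simp
  qed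
qed

lemma VVh_const_if_Xrho_zero:
  assumes J: "J \<ge> 1" and d: "d \<in> VVh p J" and zero: "\<forall>j\<in>{1..J}. \<forall>x\<in>elem J j. Xrho d x = 0"
    and x: "x \<in> {0..1}"
  shows "d x = d 0"
proof -
  have step: "d y = d (node J (j - 1))" if j: "j \<in> {1..J}" and y: "y \<in> elem_closed J j" for j y
  proof -
    obtain A B where AB: "\<forall>y\<in>elem_closed J j. d y = y *\<^sub>R A + B"
      using VVh_affine_on_elem[OF d j] by blast
    have "A = 0"
      using Xrho_affine[OF midpoint_mem_elem[OF J j] AB] zero midpoint_mem_elem[OF J j] j by simp
    then show ?thesis
      using AB y node_mem_elem_closed(2)[OF J j] by simp
  qed
  have nodes: "d (node J m) = d 0" if "m \<le> J" for m
    using that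
  proof (induction m)
    case (Suc m)
    then have "Suc m \<in> {1..J}"
      by simp
    then show ?case
      using step node_mem_elem_closed(1)[OF J] Suc by fastforce
  qed simp
  obtain j where j: "j \<in> {1..J}" "x \<in> elem_closed J j"
    using mem_elem_closed[OF J x] by blast
  moreover have "j - 1 \<le> J"
    using j(1) by auto
  ultimately show ?thesis
    using step nodes by metis
qed

lemma piecewise_cont_VVh: "X \<in> VVh p J \<Longrightarrow> piecewise_cont J X"
  by (rule piecewise_cont_if_continuous[OF VVh_continuous])

lemma piecewise_cont_Vh: "f \<in> Vh p J \<Longrightarrow> piecewise_cont J f"
  by (rule piecewise_cont_if_continuous[OF Vh_continuous])

lemma piecewise_cont_Xrho_comp: "X \<in> VVh p J \<Longrightarrow> piecewise_cont J (\<lambda>x. f (Xrho X x))"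
  by (rule piecewise_cont_if_const[OF piecewise_const_comp[OF piecewise_const_Xrho]])

lemma piecewise_cont_Xrho: "X \<in> VVh p J \<Longrightarrow> piecewise_cont J (Xrho X)"
  using piecewise_cont_Xrho_comp[of X p J "\<lambda>v. v"] by simp

lemma piecewise_cont_norm_Xrho: "X \<in> VVh p J \<Longrightarrow> piecewise_cont J (\<lambda>x. norm (Xrho X x))"
  by (rule piecewise_cont_Xrho_comp)

lemma piecewise_cont_inverse_norm_Xrho:
  "X \<in> VVh p J \<Longrightarrow> piecewise_cont J (\<lambda>x. 1 / norm (Xrho X x))"
  by (rule piecewise_cont_Xrho_comp)

lemma piecewise_cont_nu: "X \<in> VVh p J \<Longrightarrow> piecewise_cont J (nu X)"
  using piecewise_cont_Xrho_comp[of X p J "\<lambda>v. (1 / norm v) *\<^sub>R - perp v"]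
  by (simp add: nu_def[abs_def])

lemma piecewise_cont_nu_component: "X \<in> VVh p J \<Longrightarrow> piecewise_cont J (\<lambda>x. nu X x $ i)"
  using piecewise_cont_Xrho_comp[of X p J "\<lambda>v. ((1 / norm v) *\<^sub>R - perp v) $ i"]
  by (simp add: nu_def)

type_synonym fe_pair = "(real \<Rightarrow> real^2) \<times> (real \<Rightarrow> real)"

definition nodal_values :: "nat \<Rightarrow> fe_pair \<Rightarrow> nat \<Rightarrow> (real^2) \<times> real" where
  "nodal_values J u n = (if n \<le> J then (fst u (node J n), snd u (node J n)) else 0)"

lemma linear_nodal_values: "linear (nodal_values J)"
  by (rule linearI) (auto simp: nodal_values_def fun_eq_iff)

lemma inj_on_nodal_values:
  assumes J: "J \<ge> 1"
  shows "inj_on (nodal_values J) (VVh p J \<times> Vh p J)"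
proof (rule inj_onI)
  fix u v assume u: "u \<in> VVh p J \<times> Vh p J" and v: "v \<in> VVh p J \<times> Vh p J"
    and eq: "nodal_values J u = nodal_values J v"
  have sub: "subspace (VVh p J \<times> Vh p J)"
    using subspace_Times[OF subspace_VVh subspace_Vh] .
  have w: "u - v \<in> VVh p J \<times> Vh p J"
    using subspace_diff[OF sub u v] .
  have "nodal_values J (u - v) = 0"
    using eq linear_diff[OF linear_nodal_values] by simp
  then have "\<forall>k\<le>J. fst (u - v) (node J k) = 0" "\<forall>k\<le>J. snd (u - v) (node J k) = 0"
    by (auto simp: nodal_values_def fun_eq_iff prod_eq_iff split: if_splits)
  moreover have "fst (u - v) \<in> VVh p J" "snd (u - v) \<in> Vh p J"
    using w by (simp_all add: mem_Times_iff)
  ultimately have "fst (u - v) x = 0" "snd (u - v) x = 0" for x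
    using VVh_eq_0_if_nodes_eq_0[OF J] Vh_eq_0_if_nodes_eq_0[OF J] by blast+
  then have "fst (u - v) = 0" "snd (u - v) = 0"
    by (simp_all add: fun_eq_iff)
  then show "u = v"
    by (simp add: prod_eq_iff)
qed

lemma nodal_values_in_span:
  "nodal_values J u \<in> span ((\<lambda>(i, b) n. if n = i then b else 0) ` ({..J} \<times> Basis))"
  by (rule finite_support_in_span) (auto simp: nodal_values_def)

lemma finite_basis_of_FE_subspace:
  assumes J: "J \<ge> 1" and U: "subspace U" "U \<subseteq> VVh p J \<times> Vh p J"
  obtains A where "finite A" "A \<subseteq> U" "independent A" "U \<subseteq> span A"
  by (rule finite_basis_if_linear_embedding[OF U(1) linear_nodal_values
      inj_on_subset[OF inj_on_nodal_values[OF J] U(2)] _ image_subsetI[OF nodal_values_in_span]])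
    (auto intro: that)

section \<open>The discrete system\<close>

definition motion_form ::
    "bool \<Rightarrow> nat \<Rightarrow> (real \<Rightarrow> real^2) \<Rightarrow> real \<Rightarrow> (real \<Rightarrow> real^2) \<Rightarrow> (real \<Rightarrow> real) \<Rightarrow> real" where
  "motion_form lumped J X dt d c = ip_sharp lumped J (\<lambda>x. (X x \<bullet> e1) *\<^sub>R ((1 / dt) *\<^sub>R d x))
     (\<lambda>x. (c x * norm (Xrho X x)) *\<^sub>R nu X x)"

definition mass_form ::
    "bool \<Rightarrow> nat \<Rightarrow> (real \<Rightarrow> real^2) \<Rightarrow> (real \<Rightarrow> real) \<Rightarrow> (real \<Rightarrow> real) \<Rightarrow> real" where
  "mass_form lumped J X k c = ip_sharp lumped J (\<lambda>x. (X x \<bullet> e1) * k x) (\<lambda>x. c x * norm (Xrho X x))"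

definition coupling_form ::
    "bool \<Rightarrow> nat \<Rightarrow> (real \<Rightarrow> real^2) \<Rightarrow> (real \<Rightarrow> real) \<Rightarrow> (real \<Rightarrow> real^2) \<Rightarrow> real" where
  "coupling_form lumped J X k eta = ip_sharp lumped J (\<lambda>x. ((X x \<bullet> e1) * k x) *\<^sub>R nu X x)
     (\<lambda>x. norm (Xrho X x) *\<^sub>R eta x)"

definition stiffness_form :: "(real \<Rightarrow> real^2) \<Rightarrow> (real \<Rightarrow> real^2) \<Rightarrow> (real \<Rightarrow> real^2) \<Rightarrow> real" where
  "stiffness_form X d eta =
     ip (\<lambda>x. (X x \<bullet> e1) *\<^sub>R Xrho d x) (\<lambda>x. (1 / norm (Xrho X x)) *\<^sub>R Xrho eta x)"

text \<open>The unknown is \<open>u = (\<delta>X, \<kappa>)\<close>, the test pair \<open>v = (\<eta>, \<chi>)\<close>.\<close>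

definition scheme_form :: "bool \<Rightarrow> nat \<Rightarrow> (real \<Rightarrow> real^2) \<Rightarrow> real \<Rightarrow> fe_pair \<Rightarrow> fe_pair \<Rightarrow> real" where
  "scheme_form lumped J X dt u v =
     motion_form lumped J X dt (fst u) (snd v) - mass_form lumped J X (snd u) (snd v)
     + coupling_form lumped J X (snd u) (fst v) + stiffness_form X (fst u) (fst v)"

definition scheme_load ::
    "(real \<Rightarrow> real^2) \<Rightarrow> (real \<Rightarrow> real) \<Rightarrow> real set \<Rightarrow> real set \<Rightarrow> fe_pair \<Rightarrow> real" where
  "scheme_load X rh d1 d2 v =
     - ((\<Sum>q\<in>d1. rh q * (X q \<bullet> e1) * (fst v q \<bullet> e2)) + (\<Sum>q\<in>d2. rh q * (X q \<bullet> e1) * (fst v q \<bullet> e1)))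
     - ip (\<lambda>x. fst v x \<bullet> e1) (\<lambda>x. norm (Xrho X x)) - stiffness_form X X (fst v)"

context
  fixes p :: bool and J :: nat and X :: "real \<Rightarrow> real^2"
  assumes J: "J \<ge> 1" and X: "X \<in> VVh p J"
begin

lemma piecewise_cont_geometry:
  "piecewise_cont J X" "piecewise_cont J (\<lambda>x. norm (Xrho X x))"
  "piecewise_cont J (\<lambda>x. 1 / norm (Xrho X x))" "piecewise_cont J (nu X)"
  using piecewise_cont_VVh piecewise_cont_norm_Xrho piecewise_cont_inverse_norm_Xrho
    piecewise_cont_nu X by auto

lemma motion_form_lincomb_left:
  assumes "d \<in> VVh p J" "d' \<in> VVh p J" "c \<in> Vh p J"
  shows "motion_form l J X dt (a *\<^sub>R d + b *\<^sub>R d') c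
      = a * motion_form l J X dt d c + b * motion_form l J X dt d' c"
  unfolding motion_form_def
  by (rule ip_sharp_lincomb_left[OF J])
    (intro piecewise_cont_intros piecewise_cont_geometry assms(1,2)[THEN piecewise_cont_VVh]
        assms(3)[THEN piecewise_cont_Vh]
      | simp add: elemwise_eq_def algebra_simps)+

lemma motion_form_lincomb_right:
  assumes "d \<in> VVh p J" "c \<in> Vh p J" "c' \<in> Vh p J"
  shows "motion_form l J X dt d (a *\<^sub>R c + b *\<^sub>R c')
      = a * motion_form l J X dt d c + b * motion_form l J X dt d c'"
  unfolding motion_form_def
  by (rule ip_sharp_lincomb_right[OF J])
    (intro piecewise_cont_intros piecewise_cont_geometry assms(1)[THEN piecewise_cont_VVh]
        assms(2,3)[THEN piecewise_cont_Vh]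
      | simp add: elemwise_eq_def algebra_simps)+

lemma mass_form_lincomb_left:
  assumes "k \<in> Vh p J" "k' \<in> Vh p J" "c \<in> Vh p J"
  shows "mass_form l J X (a *\<^sub>R k + b *\<^sub>R k') c
      = a * mass_form l J X k c + b * mass_form l J X k' c"
  unfolding mass_form_def
  by (rule ip_sharp_lincomb_left[OF J])
    (intro piecewise_cont_intros piecewise_cont_geometry assms(1,2,3)[THEN piecewise_cont_Vh]
      | simp add: elemwise_eq_def algebra_simps)+

lemma mass_form_lincomb_right:
  assumes "k \<in> Vh p J" "c \<in> Vh p J" "c' \<in> Vh p J"
  shows "mass_form l J X k (a *\<^sub>R c + b *\<^sub>R c')
      = a * mass_form l J X k c + b * mass_form l J X k c'"
  unfolding mass_form_def
  by (rule ip_sharp_lincomb_right[OF J])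
    (intro piecewise_cont_intros piecewise_cont_geometry assms(1,2,3)[THEN piecewise_cont_Vh]
      | simp add: elemwise_eq_def algebra_simps)+

lemma coupling_form_lincomb_left:
  assumes "k \<in> Vh p J" "k' \<in> Vh p J" "eta \<in> VVh p J"
  shows "coupling_form l J X (a *\<^sub>R k + b *\<^sub>R k') eta
      = a * coupling_form l J X k eta + b * coupling_form l J X k' eta"
  unfolding coupling_form_def
  by (rule ip_sharp_lincomb_left[OF J])
    (intro piecewise_cont_intros piecewise_cont_geometry assms(3)[THEN piecewise_cont_VVh]
        assms(1,2)[THEN piecewise_cont_Vh]
      | simp add: elemwise_eq_def algebra_simps)+

lemma coupling_form_lincomb_right:
  assumes "k \<in> Vh p J" "eta \<in> VVh p J" "eta' \<in> VVh p J"
  shows "coupling_form l J X k (a *\<^sub>R eta + b *\<^sub>R eta')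
      = a * coupling_form l J X k eta + b * coupling_form l J X k eta'"
  unfolding coupling_form_def
  by (rule ip_sharp_lincomb_right[OF J])
    (intro piecewise_cont_intros piecewise_cont_geometry assms(2,3)[THEN piecewise_cont_VVh]
        assms(1)[THEN piecewise_cont_Vh]
      | simp add: elemwise_eq_def algebra_simps)+

lemma stiffness_form_lincomb_left:
  assumes "d \<in> VVh p J" "d' \<in> VVh p J" "eta \<in> VVh p J"
  shows "stiffness_form X (a *\<^sub>R d + b *\<^sub>R d') eta
      = a * stiffness_form X d eta + b * stiffness_form X d' eta"
  unfolding stiffness_form_def ip_eq_ip_sharp[where J = J]
  by (rule ip_sharp_lincomb_left[OF J])
    (intro piecewise_cont_intros piecewise_cont_geometry assms[THEN piecewise_cont_Xrho]
       | use Xrho_lincomb[OF assms(1,2)] in \<open>simp add: elemwise_eq_def algebra_simps\<close>)+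

lemma stiffness_form_lincomb_right:
  assumes "d \<in> VVh p J" "eta \<in> VVh p J" "eta' \<in> VVh p J"
  shows "stiffness_form X d (a *\<^sub>R eta + b *\<^sub>R eta')
      = a * stiffness_form X d eta + b * stiffness_form X d eta'"
  unfolding stiffness_form_def ip_eq_ip_sharp[where J = J]
  by (rule ip_sharp_lincomb_right[OF J])
    (intro piecewise_cont_intros piecewise_cont_geometry assms[THEN piecewise_cont_Xrho]
       | use Xrho_lincomb[OF assms(2,3)] in \<open>simp add: elemwise_eq_def algebra_simps\<close>)+

lemma linear_on_scheme_form_left:
  assumes v: "v \<in> VVh p J \<times> Vh p J"
  shows "linear_on (VVh p J \<times> Vh p J) (\<lambda>u. scheme_form l J X dt u v)"
  unfolding linear_on_def
proof (intro ballI allI)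
  fix u u' :: fe_pair and a b :: real
  assume "u \<in> VVh p J \<times> Vh p J" "u' \<in> VVh p J \<times> Vh p J"
  then have mem: "fst u \<in> VVh p J" "fst u' \<in> VVh p J" "snd u \<in> Vh p J" "snd u' \<in> Vh p J"
    "fst v \<in> VVh p J" "snd v \<in> Vh p J"
    using v by (simp_all add: mem_Times_iff)
  show "scheme_form l J X dt (a *\<^sub>R u + b *\<^sub>R u') v
      = a *\<^sub>R scheme_form l J X dt u v + b *\<^sub>R scheme_form l J X dt u' v"
    using motion_form_lincomb_left[OF mem(1,2,6)] mass_form_lincomb_left[OF mem(3,4,6)]
      coupling_form_lincomb_left[OF mem(3,4,5)] stiffness_form_lincomb_left[OF mem(1,2,5)]
    by (simp add: scheme_form_def algebra_simps)
qed

lemma linear_on_scheme_form_right: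
  assumes u: "u \<in> VVh p J \<times> Vh p J"
  shows "linear_on (VVh p J \<times> Vh p J) (scheme_form l J X dt u)"
  unfolding linear_on_def
proof (intro ballI allI)
  fix v v' :: fe_pair and a b :: real
  assume "v \<in> VVh p J \<times> Vh p J" "v' \<in> VVh p J \<times> Vh p J"
  then have mem: "fst v \<in> VVh p J" "fst v' \<in> VVh p J" "snd v \<in> Vh p J" "snd v' \<in> Vh p J"
    "fst u \<in> VVh p J" "snd u \<in> Vh p J"
    using u by (simp_all add: mem_Times_iff)
  show "scheme_form l J X dt u (a *\<^sub>R v + b *\<^sub>R v')
      = a *\<^sub>R scheme_form l J X dt u v + b *\<^sub>R scheme_form l J X dt u v'"
    using motion_form_lincomb_right[OF mem(5,3,4)] mass_form_lincomb_right[OF mem(6,3,4)]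
      coupling_form_lincomb_right[OF mem(6,1,2)] stiffness_form_lincomb_right[OF mem(5,1,2)]
    by (simp add: scheme_form_def algebra_simps)
qed

lemma linear_on_scheme_load: "linear_on (VVh p J \<times> Vh p J) (scheme_load X rh d1 d2)"
  unfolding linear_on_def
proof (intro ballI allI)
  fix v v' :: fe_pair and a b :: real
  assume "v \<in> VVh p J \<times> Vh p J" "v' \<in> VVh p J \<times> Vh p J"
  then have mem: "fst v \<in> VVh p J" "fst v' \<in> VVh p J"
    by (simp_all add: mem_Times_iff)
  have "ip (\<lambda>x. fst (a *\<^sub>R v + b *\<^sub>R v') x \<bullet> e1) (\<lambda>x. norm (Xrho X x))
      = a * ip (\<lambda>x. fst v x \<bullet> e1) (\<lambda>x. norm (Xrho X x))
        + b * ip (\<lambda>x. fst v' x \<bullet> e1) (\<lambda>x. norm (Xrho X x))"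
    unfolding ip_eq_ip_sharp[where J = J]
    by (rule ip_sharp_lincomb_left[OF J])
      (intro piecewise_cont_intros piecewise_cont_geometry mem[THEN piecewise_cont_VVh]
        | simp add: elemwise_eq_def inner_add_left)+
  then show "scheme_load X rh d1 d2 (a *\<^sub>R v + b *\<^sub>R v')
      = a *\<^sub>R scheme_load X rh d1 d2 v + b *\<^sub>R scheme_load X rh d1 d2 v'"
    using stiffness_form_lincomb_right[OF X mem]
    by (simp add: scheme_load_def inner_add_left sum.distrib sum_distrib_left algebra_simps)
qed

end

lemma forms_with_zero_argument:
  "motion_form l J X dt d 0 = 0" "mass_form l J X k 0 = 0" "mass_form l J X 0 c = 0"
  "coupling_form l J X k 0 = 0" "coupling_form l J X 0 eta = 0" "stiffness_form X d 0 = 0"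
  by (simp_all add: motion_form_def mass_form_def coupling_form_def stiffness_form_def
      ip_eq_ip_sharp[where J = J] ip_sharp_eq_0 Xrho_zero)

definition scheme_solution :: "bool \<Rightarrow> bool \<Rightarrow> nat \<Rightarrow> real set \<Rightarrow> real set \<Rightarrow> real set \<Rightarrow> real set
    \<Rightarrow> (real \<Rightarrow> real) \<Rightarrow> (real \<Rightarrow> real^2) \<Rightarrow> real \<Rightarrow> fe_pair \<Rightarrow> bool" where
  "scheme_solution lumped periodic J dD d0 d1 d2 rh X dt p \<longleftrightarrow>
     (\<forall>c \<in> W_sharp lumped periodic J d0.
        ip_sharp lumped J (\<lambda>x. (X x \<bullet> e1) *\<^sub>R ((1 / dt) *\<^sub>R ((X x + fst p x) - X x)))
                          (\<lambda>x. (c x * norm (Xrho X x)) *\<^sub>R nu X x)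
      = ip_sharp lumped J (\<lambda>x. (X x \<bullet> e1) * snd p x) (\<lambda>x. c x * norm (Xrho X x)))
   \<and> (\<forall>eta \<in> VVhD periodic J dD d0 d1 d2.
        ip_sharp lumped J (\<lambda>x. ((X x \<bullet> e1) * snd p x) *\<^sub>R nu X x)
                          (\<lambda>x. norm (Xrho X x) *\<^sub>R eta x)
      + ip (\<lambda>x. eta x \<bullet> e1) (\<lambda>x. norm (Xrho X x))
      + ip (\<lambda>x. (X x \<bullet> e1) *\<^sub>R Xrho (\<lambda>y. X y + fst p y) x)
           (\<lambda>x. (1 / norm (Xrho X x)) *\<^sub>R Xrho eta x)
      = - ((\<Sum>q\<in>d1. rh q * (X q \<bullet> e1) * (eta q \<bullet> e2))
         + (\<Sum>q\<in>d2. rh q * (X q \<bullet> e1) * (eta q \<bullet> e1))))"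

lemma scheme_solution_iff:
  assumes J: "J \<ge> 1" and X: "X \<in> VVh periodic J"
    and u: "u \<in> VVhD periodic J dD d0 d1 d2 \<times> W_sharp lumped periodic J d0"
  shows "scheme_solution lumped periodic J dD d0 d1 d2 rh X dt u \<longleftrightarrow>
    (\<forall>v \<in> VVhD periodic J dD d0 d1 d2 \<times> W_sharp lumped periodic J d0.
       scheme_form lumped J X dt u v = scheme_load X rh d1 d2 v)"
proof -
  have d: "fst u \<in> VVh periodic J"
    using u VVhD_subset_VVh[of periodic J dD d0 d1 d2] by (auto simp: mem_Times_iff)
  have motion: "ip_sharp lumped J (\<lambda>x. (X x \<bullet> e1) *\<^sub>R ((1 / dt) *\<^sub>R ((X x + fst u x) - X x)))
      (\<lambda>x. (c x * norm (Xrho X x)) *\<^sub>R nu X x) = motion_form lumped J X dt (fst u) c" for c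
    by (simp add: motion_form_def)
  have stiffness: "ip (\<lambda>x. (X x \<bullet> e1) *\<^sub>R Xrho (\<lambda>y. X y + fst u y) x)
      (\<lambda>x. (1 / norm (Xrho X x)) *\<^sub>R Xrho eta x)
      = stiffness_form X X eta + stiffness_form X (fst u) eta"
    if "eta \<in> VVh periodic J" for eta
    using stiffness_form_lincomb_left[OF J X X d that, of 1 1]
    by (simp add: stiffness_form_def plus_fun_def)
  have load_zero: "scheme_load X rh d1 d2 (0, c) = 0" for c
    by (simp add: scheme_load_def ip_eq_ip_sharp[where J = J] ip_sharp_eq_0
        forms_with_zero_argument)
  show ?thesis
  proof
    assume sol: "scheme_solution lumped periodic J dD d0 d1 d2 rh X dt u"
    show "\<forall>v \<in> VVhD periodic J dD d0 d1 d2 \<times> W_sharp lumped periodic J d0.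
       scheme_form lumped J X dt u v = scheme_load X rh d1 d2 v"
    proof
      fix v assume "v \<in> VVhD periodic J dD d0 d1 d2 \<times> W_sharp lumped periodic J d0"
      then have "fst v \<in> VVhD periodic J dD d0 d1 d2" "snd v \<in> W_sharp lumped periodic J d0"
        by (simp_all add: mem_Times_iff)
      then show "scheme_form lumped J X dt u v = scheme_load X rh d1 d2 v"
        using sol stiffness VVhD_subset_VVh
        unfolding scheme_solution_def scheme_form_def scheme_load_def motion
        by (fastforce simp: mass_form_def coupling_form_def)
    qed
  next
    assume form: "\<forall>v \<in> VVhD periodic J dD d0 d1 d2 \<times> W_sharp lumped periodic J d0.
       scheme_form lumped J X dt u v = scheme_load X rh d1 d2 v"
    show "scheme_solution lumped periodic J dD d0 d1 d2 rh X dt u"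
      unfolding scheme_solution_def motion
    proof (intro conjI ballI)
      fix c assume "c \<in> W_sharp lumped periodic J d0"
      then have "scheme_form lumped J X dt u (0, c) = scheme_load X rh d1 d2 (0, c)"
        using form subspace_0[OF subspace_VVhD] by simp
      then show "motion_form lumped J X dt (fst u) c
          = ip_sharp lumped J (\<lambda>x. (X x \<bullet> e1) * snd u x) (\<lambda>x. c x * norm (Xrho X x))"
        by (simp add: scheme_form_def load_zero forms_with_zero_argument mass_form_def)
    next
      fix eta assume eta: "eta \<in> VVhD periodic J dD d0 d1 d2"
      then have "scheme_form lumped J X dt u (eta, 0) = scheme_load X rh d1 d2 (eta, 0)"
        using form subspace_0[OF subspace_W_sharp] by simp
      moreover have "eta \<in> VVh periodic J"
        using eta VVhD_subset_VVh by blast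
      ultimately show "ip_sharp lumped J (\<lambda>x. ((X x \<bullet> e1) * snd u x) *\<^sub>R nu X x)
            (\<lambda>x. norm (Xrho X x) *\<^sub>R eta x)
          + ip (\<lambda>x. eta x \<bullet> e1) (\<lambda>x. norm (Xrho X x))
          + ip (\<lambda>x. (X x \<bullet> e1) *\<^sub>R Xrho (\<lambda>y. X y + fst u y) x)
              (\<lambda>x. (1 / norm (Xrho X x)) *\<^sub>R Xrho eta x)
          = - ((\<Sum>q\<in>d1. rh q * (X q \<bullet> e1) * (eta q \<bullet> e2))
              + (\<Sum>q\<in>d2. rh q * (X q \<bullet> e1) * (eta q \<bullet> e1)))"
        using stiffness
        by (simp add: scheme_form_def scheme_load_def forms_with_zero_argument coupling_form_def)
    qed
  qed
qed

section \<open>Unique solvability\<close>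

lemma X_e1_nonneg: "X \<in> VVh0 p J d0 \<Longrightarrow> assmA d0 X \<Longrightarrow> x \<in> {0..1} \<Longrightarrow> 0 \<le> X x \<bullet> e1"
  by (cases "x \<in> d0") (auto simp: VVh0_def assmA_def less_imp_le)

lemma X_e1_pos: "d0 \<subseteq> {0, 1} \<Longrightarrow> assmA d0 X \<Longrightarrow> x \<in> {0<..<1} \<Longrightarrow> 0 < X x \<bullet> e1"
  unfolding assmA_def by auto

context
  fixes p :: bool and J :: nat and X :: "real \<Rightarrow> real^2" and d0 :: "real set"
  assumes J: "J \<ge> 1" and X: "X \<in> VVh0 p J d0" and A: "assmA d0 X"
begin

lemma X_in_VVh: "X \<in> VVh p J"
  using X by (simp add: VVh0_def)

lemma stiffness_integrand:
  "((X x \<bullet> e1) *\<^sub>R Xrho d x) \<bullet> ((1 / norm (Xrho X x)) *\<^sub>R Xrho d x)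
    = X x \<bullet> e1 / norm (Xrho X x) * (Xrho d x \<bullet> Xrho d x)"
  by simp

lemma piecewise_cont_stiffness_integrand:
  "d \<in> VVh p J \<Longrightarrow>
    piecewise_cont J (\<lambda>x. ((X x \<bullet> e1) *\<^sub>R Xrho d x) \<bullet> ((1 / norm (Xrho X x)) *\<^sub>R Xrho d x))"
  by (intro piecewise_cont_intros piecewise_cont_VVh[OF X_in_VVh] piecewise_cont_Xrho
      piecewise_cont_inverse_norm_Xrho[OF X_in_VVh])

lemma stiffness_integrand_nonneg:
  "\<forall>x\<in>{0..1}. 0 \<le> ((X x \<bullet> e1) *\<^sub>R Xrho d x) \<bullet> ((1 / norm (Xrho X x)) *\<^sub>R Xrho d x)"
  unfolding stiffness_integrand using X_e1_nonneg[OF X A] by simp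

lemma stiffness_form_nonneg: "d \<in> VVh p J \<Longrightarrow> 0 \<le> stiffness_form X d d"
  unfolding stiffness_form_def ip_eq_ip_sharp[where J = J] ip_sharp_eq_integral_sharp
  by (rule integral_sharp_nonneg[OF J piecewise_cont_stiffness_integrand
        stiffness_integrand_nonneg])

lemma stiffness_form_eq_0_imp_const:
  assumes d0: "d0 \<subseteq> {0, 1}" and d: "d \<in> VVh p J" and zero: "stiffness_form X d d = 0"
    and x: "x \<in> {0..1}"
  shows "d x = d 0"
proof (rule VVh_const_if_Xrho_zero[OF J d _ x], intro ballI)
  fix j y assume j: "j \<in> {1..J}" and y: "y \<in> elem J j"
  have "((X y \<bullet> e1) *\<^sub>R Xrho d y) \<bullet> ((1 / norm (Xrho X y)) *\<^sub>R Xrho d y) = 0"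
    using zero
    by (intro integral_eq_0_imp_zero_on_elem[OF J piecewise_cont_stiffness_integrand[OF d]
          stiffness_integrand_nonneg _ j y])
      (simp add: stiffness_form_def ip_def)
  moreover have "0 < X y \<bullet> e1 / norm (Xrho X y)"
    using X_e1_pos[OF d0 A] elem_subset[OF j] y norm_Xrho_pos[OF J X_in_VVh A j y] by auto
  ultimately show "Xrho d y = 0"
    by (auto simp: stiffness_integrand)
qed

lemma mass_integrand:
  "(X x \<bullet> e1 * k x) \<bullet> (k x * norm (Xrho X x)) = X x \<bullet> e1 * norm (Xrho X x) * (k x * k x)"
  by (simp add: algebra_simps)

lemma piecewise_cont_mass_integrand:
  "k \<in> Vh p J \<Longrightarrow> piecewise_cont J (\<lambda>x. (X x \<bullet> e1 * k x) \<bullet> (k x * norm (Xrho X x)))"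
  by (intro piecewise_cont_intros piecewise_cont_VVh[OF X_in_VVh] piecewise_cont_Vh
      piecewise_cont_norm_Xrho[OF X_in_VVh])

lemma mass_integrand_nonneg:
  "\<forall>x\<in>{0..1}. 0 \<le> (X x \<bullet> e1 * k x) \<bullet> (k x * norm (Xrho X x))"
  unfolding mass_integrand using X_e1_nonneg[OF X A] by simp

lemma mass_form_nonneg: "k \<in> Vh p J \<Longrightarrow> 0 \<le> mass_form l J X k k"
  unfolding mass_form_def ip_sharp_eq_integral_sharp
  by (rule integral_sharp_nonneg[OF J piecewise_cont_mass_integrand mass_integrand_nonneg])

lemma exact_mass_form_eq_0_imp_zero_on_elem:
  assumes d0: "d0 \<subseteq> {0, 1}" and k: "k \<in> Vh p J" and zero: "mass_form False J X k k = 0"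
    and j: "j \<in> {1..J}" and x: "x \<in> elem J j"
  shows "k x = 0"
proof -
  have "(X x \<bullet> e1 * k x) \<bullet> (k x * norm (Xrho X x)) = 0"
    using zero by (intro integral_eq_0_imp_zero_on_elem[OF J piecewise_cont_mass_integrand[OF k]
        mass_integrand_nonneg _ j x])
      (simp add: mass_form_def ip_sharp_eq_integral_sharp integral_sharp_def)
  moreover have "0 < X x \<bullet> e1 * norm (Xrho X x)"
    using X_e1_pos[OF d0 A] elem_subset[OF j] x norm_Xrho_pos[OF J X_in_VVh A j x] by auto
  ultimately show ?thesis
    unfolding mass_integrand by auto
qed

text \<open>Only nodal values enter; at nodes in \<open>d0\<close>, where the weight \<open>X \<bullet> e1\<close> may vanish,
  \<open>k\<close> vanishes by definition of \<open>Wh0\<close>.\<close>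

lemma lumped_mass_form_eq_0_imp_zero_at_nodes:
  assumes k: "k \<in> Wh0 p J d0" and zero: "mass_form True J X k k = 0" and j: "j \<in> {1..J}"
  shows "k (node J j) = 0" "k (node J (j - 1)) = 0"
proof -
  have kV: "k \<in> Vh p J"
    using k by (simp add: Wh0_def)
  obtain c where c: "\<forall>x\<in>elem J j. Xrho X x = c"
    using piecewise_const_Xrho[OF X_in_VVh] j unfolding piecewise_const_def by blast
  have "0 < norm c"
    using norm_Xrho_pos[OF J X_in_VVh A j midpoint_mem_elem[OF J j]] c midpoint_mem_elem[OF J j]
    by simp
  define G where "G x = X x \<bullet> e1 * norm c * (k x * k x)" for x
  have "continuous_on (elem_closed J j) X" "continuous_on (elem_closed J j) k"
    using continuous_on_subset[OF _ elem_closed_subset[OF j]]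
      VVh_continuous[OF X_in_VVh] Vh_continuous[OF kV] by blast+
  then have G: "continuous_on (elem_closed J j) G"
    unfolding G_def by (intro continuous_intros)
  have hG: "\<forall>x\<in>elem J j. (X x \<bullet> e1 * k x) \<bullet> (k x * norm (Xrho X x)) = G x"
    using c by (simp add: G_def mass_integrand)
  have lumped_zero: "lumped_integral J (\<lambda>x. (X x \<bullet> e1 * k x) \<bullet> (k x * norm (Xrho X x))) = 0"
    using zero by (simp add: mass_form_def ip_sharp_eq_integral_sharp integral_sharp_def)
  have "G (node J j) = 0" "G (node J (j - 1)) = 0"
    using lumped_integral_eq_0_imp_Lim_0[OF J piecewise_cont_mass_integrand[OF kV]
        mass_integrand_nonneg
        lumped_zero j] Lim_at_left_node[OF J j G hG] Lim_at_right_node[OF J j G hG]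
    by simp_all
  moreover have "k q = 0" if "q \<in> {0..1}" "G q = 0" for q
  proof (cases "q \<in> d0")
    case True
    then show ?thesis
      using k by (simp add: Wh0_def)
  next
    case False
    then have "0 < X q \<bullet> e1"
      using A that(1) by (simp add: assmA_def)
    then show ?thesis
      using that(2) \<open>0 < norm c\<close> by (simp add: G_def)
  qed
  moreover have "node J j \<in> {0..1}" "node J (j - 1) \<in> {0..1}"
    using node_mem_elem_closed[OF J j] elem_closed_subset[OF j] by auto
  ultimately show "k (node J j) = 0" "k (node J (j - 1)) = 0"
    by simp_all
qed

lemma mass_form_eq_0_imp_zero:
  assumes d0: "d0 \<subseteq> {0, 1}" and k: "k \<in> W_sharp l p J d0" and zero: "mass_form l J X k k = 0"
  shows "k = 0"
proof (cases l)
  case True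
  then have kW: "k \<in> Wh0 p J d0"
    using k by (simp add: W_sharp_def)
  have "\<forall>m\<le>J. k (node J m) = 0"
  proof (intro allI impI)
    fix m assume m: "m \<le> J"
    show "k (node J m) = 0"
    proof (cases "m = 0")
      case True
      then show ?thesis
        using lumped_mass_form_eq_0_imp_zero_at_nodes(2)[OF kW, of 1] zero \<open>l\<close> J by simp
    next
      case False
      then show ?thesis
        using lumped_mass_form_eq_0_imp_zero_at_nodes(1)[OF kW, of m] zero \<open>l\<close> m by simp
    qed
  qed
  then show ?thesis
    using Vh_eq_0_if_nodes_eq_0[OF J] kW by (auto simp: Wh0_def fun_eq_iff)
next
  case False
  then have kV: "k \<in> Vh p J"
    using k by (simp add: W_sharp_def)
  show ?thesis
    using Vh_eq_0_if_zero_on_elems[OF J kV] exact_mass_form_eq_0_imp_zero_on_elem[OF d0 kV]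
      zero False
    by (auto simp: fun_eq_iff)
qed

end

context
  fixes p :: bool and J :: nat and X :: "real \<Rightarrow> real^2"
  assumes J: "J \<ge> 1" and X: "X \<in> VVh p J"
begin

lemma motion_form_antisymmetric:
  assumes dt: "dt \<noteq> 0" and d: "d \<in> VVh p J" and k: "k \<in> Vh p J"
  shows "motion_form l J X dt d ((- dt) *\<^sub>R k) = - coupling_form l J X k d"
proof -
  have "integral_sharp l J (\<lambda>x. ((X x \<bullet> e1) *\<^sub>R ((1 / dt) *\<^sub>R d x))
          \<bullet> ((((- dt) *\<^sub>R k) x * norm (Xrho X x)) *\<^sub>R nu X x))
      = (- 1) * integral_sharp l J (\<lambda>x. ((X x \<bullet> e1 * k x) *\<^sub>R nu X x) \<bullet> (norm (Xrho X x) *\<^sub>R d x))"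
    by (rule integral_sharp_scale[OF J])
      (intro piecewise_cont_intros piecewise_cont_geometry[OF J X] piecewise_cont_VVh[OF d]
          piecewise_cont_Vh[OF k]
        | use dt in \<open>simp add: elemwise_eq_def inner_commute\<close>)+
  then show ?thesis
    by (simp add: motion_form_def coupling_form_def ip_sharp_eq_integral_sharp)
qed

lemma scheme_form_energy:
  assumes dt: "dt \<noteq> 0" and d: "d \<in> VVh p J" and k: "k \<in> Vh p J"
  shows "scheme_form l J X dt (d, k) (d, (- dt) *\<^sub>R k)
    = dt * mass_form l J X k k + stiffness_form X d d"
  using motion_form_antisymmetric[OF dt d k] mass_form_lincomb_right[OF J X k k k, of l "- dt" 0]
  by (simp add: scheme_form_def)

lemma motion_form_of_constant:
  assumes c: "c \<in> Vh p J" and d: "\<forall>x\<in>{0..1}. d x = d 0"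
  shows "motion_form l J X dt d c = (1 / dt) * (d 0 \<bullet>
    (\<chi> i. ip_sharp l J (\<lambda>x. (X x \<bullet> e1) * (nu X x $ i)) (\<lambda>x. c x * norm (Xrho X x))))"
proof -
  have pc: "piecewise_cont J (\<lambda>x. (X x \<bullet> e1 * nu X x $ i) \<bullet> (c x * norm (Xrho X x)))" for i
    by (intro piecewise_cont_intros piecewise_cont_geometry[OF J X] piecewise_cont_Vh[OF c]
        piecewise_cont_nu_component[OF X])
  have "elemwise_eq J
      (\<lambda>x. ((X x \<bullet> e1) *\<^sub>R ((1 / dt) *\<^sub>R d x)) \<bullet> ((c x * norm (Xrho X x)) *\<^sub>R nu X x))
      (\<lambda>x. (d 0 $ 1 / dt) * ((X x \<bullet> e1 * nu X x $ 1) \<bullet> (c x * norm (Xrho X x)))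
         + (d 0 $ 2 / dt) * ((X x \<bullet> e1 * nu X x $ 2) \<bullet> (c x * norm (Xrho X x))))"
    unfolding elemwise_eq_def
  proof (intro ballI)
    fix j x assume "j \<in> {1..J}" "x \<in> elem J j"
    then have "x \<in> {0..1}"
      using elem_subset[of j J] by auto
    then have "d x = d 0"
      using d by blast
    then show "((X x \<bullet> e1) *\<^sub>R ((1 / dt) *\<^sub>R d x)) \<bullet> ((c x * norm (Xrho X x)) *\<^sub>R nu X x)
      = (d 0 $ 1 / dt) * ((X x \<bullet> e1 * nu X x $ 1) \<bullet> (c x * norm (Xrho X x)))
        + (d 0 $ 2 / dt) * ((X x \<bullet> e1 * nu X x $ 2) \<bullet> (c x * norm (Xrho X x)))"
      by (simp add: inner_vec_def sum_2 algebra_simps)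
  qed
  then have "integral_sharp l J
        (\<lambda>x. ((X x \<bullet> e1) *\<^sub>R ((1 / dt) *\<^sub>R d x)) \<bullet> ((c x * norm (Xrho X x)) *\<^sub>R nu X x))
      = (d 0 $ 1 / dt) * integral_sharp l J (\<lambda>x. (X x \<bullet> e1 * nu X x $ 1) \<bullet> (c x * norm (Xrho X x)))
        + (d 0 $ 2 / dt)
          * integral_sharp l J (\<lambda>x. (X x \<bullet> e1 * nu X x $ 2) \<bullet> (c x * norm (Xrho X x)))"
    by (rule integral_sharp_lincomb[OF J pc pc])
  then show ?thesis
    by (simp add: motion_form_def ip_sharp_eq_integral_sharp inner_vec_def sum_2 algebra_simps)
qed

end

lemma scheme_form_nondegenerate:
  assumes J: "J \<ge> 1" and d0: "d0 \<subseteq> {0, 1}" and X: "X \<in> VVh0 p J d0" and A: "assmA d0 X"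
    and C: "assmC l p J d0 X" and dt: "dt > 0"
    and u: "u \<in> VVhD p J dD d0 d1 d2 \<times> W_sharp l p J d0"
    and zero: "\<forall>v \<in> VVhD p J dD d0 d1 d2 \<times> W_sharp l p J d0. scheme_form l J X dt u v = 0"
  shows "u = 0"
proof -
  obtain d k where u_def: "u = (d, k)"
    by (cases u)
  have dD: "d \<in> VVhD p J dD d0 d1 d2" and kW: "k \<in> W_sharp l p J d0"
    using u by (simp_all add: u_def)
  have XV: "X \<in> VVh p J"
    using X by (simp add: VVh0_def)
  have dV: "d \<in> VVh p J"
    using dD VVhD_subset_VVh by blast
  have kV: "k \<in> Vh p J"
    using kW W_sharp_subset_Vh by blast
  have "(d, (- dt) *\<^sub>R k) \<in> VVhD p J dD d0 d1 d2 \<times> W_sharp l p J d0"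
    using dD subspace_scale[OF subspace_W_sharp kW, of "- dt"] by simp
  then have "scheme_form l J X dt (d, k) (d, (- dt) *\<^sub>R k) = 0"
    using zero unfolding u_def by blast
  then have "dt * mass_form l J X k k + stiffness_form X d d = 0"
    using scheme_form_energy[OF J XV _ dV kV, of dt l] dt by simp
  moreover have "0 \<le> dt * mass_form l J X k k" "0 \<le> stiffness_form X d d"
    using mass_form_nonneg[OF J X A kV] stiffness_form_nonneg[OF J X A dV] dt by simp_all
  ultimately have "dt * mass_form l J X k k = 0" "stiffness_form X d d = 0"
    by linarith+
  then have mass0: "mass_form l J X k k = 0" and stiff0: "stiffness_form X d d = 0"
    using dt by simp_all
  have k0: "k = 0"
    by (rule mass_form_eq_0_imp_zero[OF J X A d0 kW mass0])
  have const: "\<forall>x\<in>{0..1}. d x = d 0"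
    using stiffness_form_eq_0_imp_const[OF J X A d0 dV stiff0] by blast
  have orth: "d 0 \<bullet> (\<chi> i. ip_sharp l J (\<lambda>x. (X x \<bullet> e1) * (nu X x $ i))
      (\<lambda>x. c x * norm (Xrho X x))) = 0"
    if c: "c \<in> W_sharp l p J d0" for c
  proof -
    have "(0, c) \<in> VVhD p J dD d0 d1 d2 \<times> W_sharp l p J d0"
      using c subspace_0[OF subspace_VVhD] by simp
    then have "scheme_form l J X dt (d, 0) (0, c) = 0"
      using zero unfolding u_def k0 by blast
    then have "motion_form l J X dt d c = 0"
      by (simp add: scheme_form_def forms_with_zero_argument)
    moreover have "c \<in> Vh p J"
      using c W_sharp_subset_Vh by blast
    ultimately show ?thesis
      using motion_form_of_constant[OF J XV _ const, of c l dt] dt by simp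
  qed
  have "d 0 = 0"
    by (rule orthogonal_to_spanning_set[OF C[unfolded assmC_def]]) (use orth in blast)
  then have "d x = 0" for x
    using bspec[OF const, of x] VVh_outside[OF dV, of x] by (cases "x \<in> {0..1}") simp_all
  then have "d = 0"
    by (simp add: fun_eq_iff)
  then show ?thesis
    using k0 by (simp add: u_def zero_prod_def)
qed

theorem lemma4p3:
  fixes periodic lumped :: bool and J :: nat
    and dD d0 d1 d2 :: "real set" and rh :: "real \<Rightarrow> real"
    and X :: "real \<Rightarrow> real^2" and dt :: real
  assumes J: "J \<ge> 3"
    and part: "dD \<union> d0 \<union> d1 \<union> d2 = bdry periodic"
    and disj: "dD \<inter> d0 = {}" "dD \<inter> d1 = {}" "dD \<inter> d2 = {}"
              "d0 \<inter> d1 = {}" "d0 \<inter> d2 = {}" "d1 \<inter> d2 = {}"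
    and rh: "\<forall>p\<in>bdry periodic. \<bar>rh p\<bar> \<le> 1"
    and X: "X \<in> VVh0 periodic J d0"
    and A: "assmA d0 X"
    and C: "assmC lumped periodic J d0 X"
    and dt: "dt > 0"
  shows "\<exists>!p \<in> VVhD periodic J dD d0 d1 d2 \<times> W_sharp lumped periodic J d0.
     (\<forall>c \<in> W_sharp lumped periodic J d0.
        ip_sharp lumped J (\<lambda>x. (X x \<bullet> e1) *\<^sub>R ((1 / dt) *\<^sub>R ((X x + fst p x) - X x)))
                          (\<lambda>x. (c x * norm (Xrho X x)) *\<^sub>R nu X x)
      = ip_sharp lumped J (\<lambda>x. (X x \<bullet> e1) * snd p x) (\<lambda>x. c x * norm (Xrho X x)))
   \<and> (\<forall>eta \<in> VVhD periodic J dD d0 d1 d2.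
        ip_sharp lumped J (\<lambda>x. ((X x \<bullet> e1) * snd p x) *\<^sub>R nu X x)
                          (\<lambda>x. norm (Xrho X x) *\<^sub>R eta x)
      + ip (\<lambda>x. eta x \<bullet> e1) (\<lambda>x. norm (Xrho X x))
      + ip (\<lambda>x. (X x \<bullet> e1) *\<^sub>R Xrho (\<lambda>y. X y + fst p y) x)
           (\<lambda>x. (1 / norm (Xrho X x)) *\<^sub>R Xrho eta x)
      = - ((\<Sum>q\<in>d1. rh q * (X q \<bullet> e1) * (eta q \<bullet> e2))
         + (\<Sum>q\<in>d2. rh q * (X q \<bullet> e1) * (eta q \<bullet> e1))))"
proof -
  define U where "U = VVhD periodic J dD d0 d1 d2 \<times> W_sharp lumped periodic J d0"
  have J1: "J \<ge> 1" and d0: "d0 \<subseteq> {0, 1}" and XV: "X \<in> VVh periodic J"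
    using J part X by (auto simp: bdry_def VVh0_def split: if_splits)
  have U: "subspace U" "U \<subseteq> VVh periodic J \<times> Vh periodic J"
    unfolding U_def
    by (rule subspace_Times[OF subspace_VVhD subspace_W_sharp],
        intro Sigma_mono VVhD_subset_VVh W_sharp_subset_Vh)
  obtain A where basis: "finite A" "A \<subseteq> U" "independent A" "U \<subseteq> span A"
    using finite_basis_of_FE_subspace[OF J1 U] .
  have "\<exists>!u. u \<in> U \<and> (\<forall>v\<in>U. scheme_form lumped J X dt u v = scheme_load X rh d1 d2 v)"
  proof (rule unique_solution_if_nondegenerate[OF U(1) basis])
    show "linear_on U (\<lambda>u. scheme_form lumped J X dt u v)" if "v \<in> U" for v
      using linear_on_scheme_form_left[OF J1 XV] that U(2) by (blast intro: linear_on_subset)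
    show "linear_on U (scheme_form lumped J X dt u)" if "u \<in> U" for u
      using linear_on_scheme_form_right[OF J1 XV] that U(2) by (blast intro: linear_on_subset)
    show "linear_on U (scheme_load X rh d1 d2)"
      using linear_on_subset[OF linear_on_scheme_load[OF J1 XV] U(2)] .
    show "u = 0" if "u \<in> U" "\<forall>v\<in>U. scheme_form lumped J X dt u v = 0" for u
      using scheme_form_nondegenerate[OF J1 d0 X A C dt] that unfolding U_def by blast
  qed
  then have "\<exists>!u. u \<in> U \<and> scheme_solution lumped periodic J dD d0 d1 d2 rh X dt u"
    unfolding U_def by (simp add: scheme_solution_iff[OF J1 XV] cong: conj_cong)
  then show ?thesis
    unfolding U_def scheme_solution_def .
qed

end
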